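(* Let $\psi:[0,1]^p\to\mathbb R$ be continuous, let $K,K'\subset I:=\{1,\dots,p\}$ (possibly empty), and define on the space $\mathcal C_p$ of cumulative distribution functions on $[0,1]^p$ the map $$\Psi_{K,K'}(C):=\int\psi(\mathbf u)\,C_K(\mathbf u_K)\,C_{K'}(d\mathbf u_{K'})\,d\mathbf u_{I\setminus K'}.$$ Let $C$ be a $p$-dimensional copula such that the map $\chi(\mathbf u_{K'}):=\int\psi(\mathbf u)C_K(\mathbf u_K)\,d\mathbf u_{I\setminus K'}$ is of bounded variation on $[0,1]^{|K'|}$. Then $\Psi_{K,K'}:\mathcal C_p\to\mathbb R$ is Hadamard differentiable at $C$, tangentially to the set of real continuous functions on $[0,1]^p$, with derivative $$\Psi'_{K,K'}(C)(h)=\int\psi(\mathbf u)\,h_K(\mathbf u_K)\,C_{K'}(d\mathbf u_{K'})\,d\mathbf u_{I\setminus K'}+\int\psi(\mathbf u)\,C_K(\mathbf u_K)\,h_{K'}(d\mathbf u_{K'})\,d\mathbf u_{I\setminus K'}$$ for every continuous $h:[0,1]^p\to\mathbb R$.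
   Context: For $K\subset I$ and a function $G$ on $[0,1]^p$, $\mathbf u_K:=(u_j)_{j\in K}$ and $G_K(\mathbf u_K)$ denotes $G$ evaluated at the point whose coordinates in $K$ are $\mathbf u_K$ and whose other coordinates equal $1$ (so $C_K$ is the margin of $C$ on the coordinates in $K$). When $K'=\emptyset$ there is no integration with respect to $C_{K'}(d\mathbf u_{K'})$ (resp. $h_{K'}$); when $K'=I$ there is no integration with respect to $d\mathbf u_{I\setminus K'}$ (Lebesgue measure). When $h$ is not of bounded variation, the second integral in the derivative is defined via integration by parts (for multivariate functions of bounded variation in the sense of Hardy–Krause), transferring the integration onto $\chi$. *)

theory Defs
  imports "HOL-Analysis.Analysis" "HOL-Probability.Probability"
begin

text \<open>Points of [0,1]^p are vectors of type real^'n with p = CARD('n); the index set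
  I = {1..p} is the finite type 'n, i.e. UNIV :: 'n set.\<close>

text \<open>Margin: G_K(u_K) = G evaluated at the point with coordinates u_i (i in K) and 1 elsewhere.\<close>
definition marg :: "'n::finite set \<Rightarrow> (real^'n \<Rightarrow> real) \<Rightarrow> real^'n \<Rightarrow> real" where
  "marg K G u = G (\<chi> i. if i \<in> K then u$i else 1)"

definition mix :: "'n::finite set \<Rightarrow> real^'n \<Rightarrow> real^'n \<Rightarrow> real^'n" where
  "mix K' x w = (\<chi> i. if i \<in> K' then x$i else w$i)"

definition cdf_of :: "(real^'n::finite \<Rightarrow> real) \<Rightarrow> (real^'n) measure \<Rightarrow> bool" where
  "cdf_of C M \<longleftrightarrow> prob_space M \<and> sets M = sets borel \<and> emeasure M (cbox 0 1) = 1 \<and>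
     (\<forall>u\<in>cbox 0 1. C u = measure M (cbox 0 u))"

definition cdfs :: "(real^'n::finite \<Rightarrow> real) set" where
  "cdfs = {C. \<exists>M. cdf_of C M}"

definition cdf_measure :: "(real^'n::finite \<Rightarrow> real) \<Rightarrow> (real^'n) measure" where
  "cdf_measure C = (SOME M. cdf_of C M)"

definition copula :: "(real^'n::finite \<Rightarrow> real) \<Rightarrow> bool" where
  "copula C \<longleftrightarrow> C \<in> cdfs \<and> (\<forall>i. \<forall>t\<in>{0..1}. C (\<chi> j. if j = i then t else 1) = t)"

text \<open>chi(u_{K'}) = \<integral> psi(u) G_K(u_K) du_{I\K'} (depends only on the K'-coordinates of v).\<close>
definition chi :: "'n::finite set \<Rightarrow> 'n set \<Rightarrow> (real^'n \<Rightarrow> real) \<Rightarrow> (real^'n \<Rightarrow> real)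
    \<Rightarrow> real^'n \<Rightarrow> real" where
  "chi K K' \<psi> G v = (LINT w | lebesgue_on (cbox 0 1). \<psi> (mix K' v w) * marg K G (mix K' v w))"

text \<open>Psi_{K,K'}(C) = \<integral> psi(u) C_K(u_K) C_{K'}(du_{K'}) du_{I\K'}; the measure C_{K'}(du_{K'})
  is the law of the K'-coordinates under the distribution with cdf C.\<close>
definition Psi :: "'n::finite set \<Rightarrow> 'n set \<Rightarrow> (real^'n \<Rightarrow> real) \<Rightarrow> (real^'n \<Rightarrow> real) \<Rightarrow> real" where
  "Psi K K' \<psi> C = (LINT x | restrict_space (cdf_measure C) (cbox 0 1). chi K K' \<psi> C x)"

definition nxt :: "real set \<Rightarrow> real \<Rightarrow> real" where
  "nxt P x = Min {y\<in>P. x < y}"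

definition grid :: "'n set \<Rightarrow> ('n \<Rightarrow> real set) \<Rightarrow> bool" where
  "grid J P \<longleftrightarrow> (\<forall>j\<in>J. finite (P j) \<and> P j \<subseteq> {0..1} \<and> 0 \<in> P j \<and> 1 \<in> P j)"

text \<open>Cells of the grid, indexed by their lower corners.\<close>
definition cells :: "'n set \<Rightarrow> ('n \<Rightarrow> real set) \<Rightarrow> ('n \<Rightarrow> real) set" where
  "cells J P = PiE J (\<lambda>j. P j - {1})"

definition vol :: "'n::finite set \<Rightarrow> (real^'n \<Rightarrow> real) \<Rightarrow> ('n \<Rightarrow> real) \<Rightarrow> ('n \<Rightarrow> real) \<Rightarrow> real" where
  "vol J g a b = (\<Sum>L\<in>Pow J. (-1) ^ card L *
      g (\<chi> i. if i \<in> L then a i else if i \<in> J then b i else 1))"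

definition vitali_var :: "'n::finite set \<Rightarrow> (real^'n \<Rightarrow> real) \<Rightarrow> ereal" where
  "vitali_var J g = (SUP P\<in>{P. grid J P}.
      ereal (\<Sum>a\<in>cells J P. \<bar>vol J g a (\<lambda>j. nxt (P j) (a j))\<bar>))"

definition hk_bv :: "'n::finite set \<Rightarrow> (real^'n \<Rightarrow> real) \<Rightarrow> bool" where
  "hk_bv S g \<longleftrightarrow> (\<forall>J. J \<subseteq> S \<and> J \<noteq> {} \<longrightarrow> vitali_var J g < \<infinity>)"

definition rs_tags :: "'n::finite set \<Rightarrow> ('n \<Rightarrow> real set) \<Rightarrow> (('n \<Rightarrow> real) \<Rightarrow> real^'n) \<Rightarrow> bool" where
  "rs_tags J P \<tau> \<longleftrightarrow> (\<forall>a\<in>cells J P. (\<forall>j\<in>J. a j \<le> \<tau> a $ j \<and> \<tau> a $ j \<le> nxt (P j) (a j))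
        \<and> (\<forall>i. i \<notin> J \<longrightarrow> \<tau> a $ i = 1))"

definition rs_sum :: "'n::finite set \<Rightarrow> (real^'n \<Rightarrow> real) \<Rightarrow> (real^'n \<Rightarrow> real) \<Rightarrow> ('n \<Rightarrow> real set)
    \<Rightarrow> (('n \<Rightarrow> real) \<Rightarrow> real^'n) \<Rightarrow> real" where
  "rs_sum J f g P \<tau> = (\<Sum>a\<in>cells J P. f (\<tau> a) * vol J g a (\<lambda>j. nxt (P j) (a j)))"

definition rs_has :: "'n::finite set \<Rightarrow> (real^'n \<Rightarrow> real) \<Rightarrow> (real^'n \<Rightarrow> real) \<Rightarrow> real \<Rightarrow> bool" where
  "rs_has J f g I \<longleftrightarrow> (\<forall>\<epsilon>>0. \<exists>\<delta>>0. \<forall>P \<tau>. grid J P \<and> (\<forall>j\<in>J. \<forall>x\<in>P j - {1}. nxt (P j) x - x < \<delta>)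
       \<and> rs_tags J P \<tau> \<longrightarrow> \<bar>rs_sum J f g P \<tau> - I\<bar> < \<epsilon>)"

definition rs_int :: "'n::finite set \<Rightarrow> (real^'n \<Rightarrow> real) \<Rightarrow> (real^'n \<Rightarrow> real) \<Rightarrow> real" where
  "rs_int J f g = (THE I. rs_has J f g I)"

text \<open>The second integral \<integral> psi C_K h_{K'}(du_{K'}) du_{I\K'} =
  \<integral> chi dh_{K'} is defined by multivariate integration by parts, transferring the integration
  onto chi:  \<integral> chi dh_{K'} = \<Sum>_{J \<subseteq> K'} (-1)^{|J|} \<integral>_{[0,1]^J} h(w_J:1) d chi(w_J:1).\<close>
definition Dpsi :: "'n::finite set \<Rightarrow> 'n set \<Rightarrow> (real^'n \<Rightarrow> real) \<Rightarrow> (real^'n \<Rightarrow> real)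
    \<Rightarrow> (real^'n \<Rightarrow> real) \<Rightarrow> real" where
  "Dpsi K K' \<psi> C h =
     (LINT x | restrict_space (cdf_measure C) (cbox 0 1). chi K K' \<psi> h x)
     + (\<Sum>J\<in>Pow K'. (-1) ^ card J * rs_int J h (chi K K' \<psi> C))"

definition hadamard_diff_tangent :: "((real^'n::finite \<Rightarrow> real) \<Rightarrow> real) \<Rightarrow> (real^'n \<Rightarrow> real) set
    \<Rightarrow> (real^'n \<Rightarrow> real) set \<Rightarrow> (real^'n \<Rightarrow> real) \<Rightarrow> ((real^'n \<Rightarrow> real) \<Rightarrow> real) \<Rightarrow> bool" where
  "hadamard_diff_tangent \<Phi> Dom T C D \<longleftrightarrow>
     (\<forall>f\<in>T. \<forall>g\<in>T. \<forall>a b. D (\<lambda>u. a * f u + b * g u) = a * D f + b * D g) \<and>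
     (\<exists>B. \<forall>f\<in>T. \<bar>D f\<bar> \<le> B * (SUP u\<in>cbox 0 1. \<bar>f u\<bar>)) \<and>
     (\<forall>t hs h. (\<forall>n. t n \<noteq> 0) \<longrightarrow> t \<longlonglongrightarrow> 0 \<longrightarrow> h \<in> T \<longrightarrow>
        uniform_limit (cbox 0 1) hs h sequentially \<longrightarrow>
        (\<forall>n. (\<lambda>u. C u + t n * hs n u) \<in> Dom) \<longrightarrow>
        (\<lambda>n. (\<Phi> (\<lambda>u. C u + t n * hs n u) - \<Phi> C) / t n) \<longlonglongrightarrow> D h)"

end

theory Submission
  imports Defs
begin

text \<open>Write C_n = C + t_n h_n. Since chi is linear in the cdf it is built from, the difference
  quotient of Psi splits into the integral of (chi C_n - chi C) / t_n, which is uniformly close to chi h,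
  against the law of C_n, plus the difference quotient of the integrals of the fixed continuous function
  chi C against the laws of C_n and C. The first part converges because pointwise convergence of cdfs on
  the cube gives convergence of integrals of continuous functions. For the second, chi C is replaced by
  a step function on a fine grid; summation by parts turns its integral against the law of a cdf F into
  an alternating sum of quasi-volumes of chi C on the grid cells weighted by values of F. The difference
  quotient thus becomes a sum of Riemann--Stieltjes sums of h_n against chi C, and these converge to the
  Stieltjes integrals in the derivative because chi C has bounded Hardy--Krause variation.\<close>

section \<open>Quasi-volumes on grids\<close>

abbreviation cube :: "(real^'n::finite) set" where
  "cube \<equiv> cbox 0 1"

definition vec_upd :: "real^'n \<Rightarrow> 'n \<Rightarrow> real \<Rightarrow> real^'n" where
  "vec_upd x j c = (\<chi> i. if i = j then c else x$i)"

lemma vec_upd_nth [simp]: "vec_upd x j c $ i = (if i = j then c else x$i)"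
  by (simp add: vec_upd_def)

definition face_point :: "'n set \<Rightarrow> ('n \<Rightarrow> real) \<Rightarrow> real^'n" where
  "face_point J a = (\<chi> i. if i \<in> J then a i else 1)"

lemma face_point_nth [simp]: "face_point J a $ i = (if i \<in> J then a i else 1)"
  by (simp add: face_point_def)

definition cell_vol :: "'n::finite set \<Rightarrow> (real^'n \<Rightarrow> real) \<Rightarrow> ('n \<Rightarrow> real set) \<Rightarrow> ('n \<Rightarrow> real) \<Rightarrow> real" where
  "cell_vol J g P a = vol J g a (\<lambda>j. nxt (P j) (a j))"

definition grid_variation :: "'n::finite set \<Rightarrow> (real^'n \<Rightarrow> real) \<Rightarrow> ('n \<Rightarrow> real set) \<Rightarrow> real" where
  "grid_variation J g P = (\<Sum>a\<in>cells J P. \<bar>cell_vol J g P a\<bar>)"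

lemma rs_sum_cell_vol: "rs_sum J f g P \<tau> = (\<Sum>a\<in>cells J P. f (\<tau> a) * cell_vol J g P a)"
  by (simp add: rs_sum_def cell_vol_def)

lemma vol_insert:
  fixes g :: "real^'n::finite \<Rightarrow> real"
  assumes "j \<notin> J"
  shows "vol (insert j J) g a b = vol J (\<lambda>x. g (vec_upd x j (b j))) a b - vol J (\<lambda>x. g (vec_upd x j (a j))) a b"
proof -
  let ?pt = "\<lambda>L J. (\<chi> i. if i \<in> L then a i else if i \<in> J then b i else 1) :: real^'n"
  have inj: "inj_on (insert j) (Pow J)"
    using assms by (auto simp: inj_on_def)
  have disj: "Pow J \<inter> insert j ` Pow J = {}"
    using assms by auto
  have "vol (insert j J) g a b = (\<Sum>L\<in>Pow J. (-1) ^ card L * g (?pt L (insert j J)))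
      + (\<Sum>L\<in>insert j ` Pow J. (-1) ^ card L * g (?pt L (insert j J)))"
    unfolding vol_def Pow_insert by (rule sum.union_disjoint) (use disj in auto)
  also have "(\<Sum>L\<in>Pow J. (-1) ^ card L * g (?pt L (insert j J))) = vol J (\<lambda>x. g (vec_upd x j (b j))) a b"
    unfolding vol_def
  proof (rule sum.cong[OF refl])
    fix L assume "L \<in> Pow J"
    then have "?pt L (insert j J) = vec_upd (?pt L J) j (b j)"
      using assms by (auto simp: vec_eq_iff)
    then show "(-1) ^ card L * g (?pt L (insert j J)) = (-1) ^ card L * g (vec_upd (?pt L J) j (b j))"
      by simp
  qed
  also have "(\<Sum>L\<in>insert j ` Pow J. (-1) ^ card L * g (?pt L (insert j J))) = - vol J (\<lambda>x. g (vec_upd x j (a j))) a b"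
    unfolding vol_def sum.reindex[OF inj] sum_negf[symmetric] o_def
  proof (rule sum.cong[OF refl])
    fix L assume L: "L \<in> Pow J"
    then have "finite L" "j \<notin> L"
      using assms finite_subset by auto
    moreover have "?pt (insert j L) (insert j J) = vec_upd (?pt L J) j (a j)"
      using L assms by (auto simp: vec_eq_iff)
    ultimately show "(-1) ^ card (insert j L) * g (?pt (insert j L) (insert j J))
        = - ((-1) ^ card L * g (vec_upd (?pt L J) j (a j)))"
      by simp
  qed
  finally show ?thesis by simp
qed

lemma vol_cong:
  assumes "\<And>j. j \<in> J \<Longrightarrow> a j = a' j" "\<And>j. j \<in> J \<Longrightarrow> b j = b' j"
  shows "vol J g a b = vol J g a' b'"
  unfolding vol_def
  by (rule sum.cong[OF refl], rule arg_cong[where f="\<lambda>x. _ * g x"]) (use assms in \<open>auto simp: vec_eq_iff\<close>)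

lemma nxt_eqI:
  assumes "finite R" "b \<in> R" "x < b" "\<And>y. y \<in> R \<Longrightarrow> x < y \<Longrightarrow> b \<le> y"
  shows "nxt R x = b"
  unfolding nxt_def using assms by (intro Min_eqI) auto

lemma nxt_props:
  assumes "finite P" "1 \<in> P" "x < 1"
  shows "nxt P x \<in> P" "x < nxt P x" "\<And>y. y \<in> P \<Longrightarrow> x < y \<Longrightarrow> nxt P x \<le> y"
proof -
  have ne: "{y\<in>P. x < y} \<noteq> {}" and fin: "finite {y\<in>P. x < y}"
    using assms by auto
  show "nxt P x \<in> P" "x < nxt P x"
    using Min_in[OF fin ne] by (auto simp: nxt_def)
  show "\<And>y. y \<in> P \<Longrightarrow> x < y \<Longrightarrow> nxt P x \<le> y"
    using fin by (auto simp: nxt_def)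
qed

lemma sum_nxt_telescope:
  fixes f :: "real \<Rightarrow> 'b::ab_group_add"
  assumes "finite R" "\<alpha> \<in> R" "\<beta> \<in> R" "\<alpha> \<le> \<beta>"
  shows "(\<Sum>y\<in>{y\<in>R. \<alpha> \<le> y \<and> y < \<beta>}. f (nxt R y) - f y) = f \<beta> - f \<alpha>"
  using assms(3,4)
proof (induction "card {y\<in>R. \<alpha> \<le> y \<and> y < \<beta>}" arbitrary: \<beta> rule: less_induct)
  case less
  define S where "S = {y\<in>R. \<alpha> \<le> y \<and> y < \<beta>}"
  show ?case
  proof (cases "S = {}")
    case True
    then have "\<alpha> = \<beta>"
      using less.prems assms(2) by (force simp: S_def)
    then show ?thesis unfolding True[unfolded S_def] by simp
  next
    case False
    have finS: "finite S"
      using assms(1) by (simp add: S_def)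
    define m where "m = Max S"
    have mS: "m \<in> S" and mmax: "\<And>y. y \<in> S \<Longrightarrow> y \<le> m"
      using Max_in[OF finS False] finS by (auto simp: m_def)
    have nxt_m: "nxt R m = \<beta>"
    proof (rule nxt_eqI[OF assms(1) less.prems(1)])
      show "m < \<beta>" using mS by (simp add: S_def)
      fix y assume "y \<in> R" "m < y"
      then show "\<beta> \<le> y" using mmax[of y] mS by (force simp: S_def)
    qed
    have S_eq: "S = insert m {y\<in>R. \<alpha> \<le> y \<and> y < m}"
      using mS mmax by (force simp: S_def)
    have "card {y\<in>R. \<alpha> \<le> y \<and> y < m} < card S"
      using assms(1) by (subst S_eq) simp
    then have IH: "(\<Sum>y\<in>{y\<in>R. \<alpha> \<le> y \<and> y < m}. f (nxt R y) - f y) = f m - f \<alpha>"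
      using less.hyps mS by (auto simp: S_def)
    have "(\<Sum>y\<in>S. f (nxt R y) - f y) = (f (nxt R m) - f m) + (\<Sum>y\<in>{y\<in>R. \<alpha> \<le> y \<and> y < m}. f (nxt R y) - f y)"
      using assms(1) by (subst S_eq) (simp add: sum.insert)
    then show ?thesis
      using IH nxt_m by (simp add: S_def)
  qed
qed

lemma vol_sum_PiE:
  fixes g :: "real^'n::finite \<Rightarrow> real"
  assumes fin: "\<And>j. j \<in> J \<Longrightarrow> finite (A j)"
    and tel: "\<And>j f. j \<in> J \<Longrightarrow> (\<Sum>y\<in>A j. f (n j y) - f y) = (f (\<beta> j) - f (\<alpha> j) :: real)"
  shows "(\<Sum>a\<in>PiE J A. vol J g a (\<lambda>j. n j (a j))) = vol J g \<alpha> \<beta>"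
proof -
  have "finite J" by simp
  then show ?thesis using fin tel
  proof (induction J arbitrary: g rule: finite_induct)
    case empty
    then show ?case by (simp add: vol_def)
  next
    case (insert j J)
    have IH: "\<And>g. (\<Sum>a\<in>PiE J A. vol J g a (\<lambda>j. n j (a j))) = vol J g \<alpha> \<beta>"
      using insert by auto
    have "(\<Sum>a\<in>PiE (insert j J) A. vol (insert j J) g a (\<lambda>j. n j (a j)))
       = (\<Sum>y\<in>A j. \<Sum>a\<in>PiE J A. vol (insert j J) g (a(j := y)) (\<lambda>i. n i ((a(j := y)) i)))"
      unfolding PiE_insert_eq
      by (subst sum.reindex[OF inj_combinator[OF insert.hyps(2)]])
        (simp add: sum.cartesian_product o_def case_prod_unfold)
    also have "\<dots> = (\<Sum>y\<in>A j. \<Sum>a\<in>PiE J A. vol J (\<lambda>x. g (vec_upd x j (n j y))) a (\<lambda>i. n i (a i))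
                                   - vol J (\<lambda>x. g (vec_upd x j y)) a (\<lambda>i. n i (a i)))"
      unfolding vol_insert[OF insert.hyps(2)] using insert.hyps(2)
      by (auto intro!: sum.cong arg_cong2[where f="(-)"] vol_cong)
    also have "\<dots> = (\<Sum>y\<in>A j. vol J (\<lambda>x. g (vec_upd x j (n j y))) \<alpha> \<beta> - vol J (\<lambda>x. g (vec_upd x j y)) \<alpha> \<beta>)"
      by (simp add: sum_subtractf IH)
    also have "\<dots> = vol J (\<lambda>x. g (vec_upd x j (\<beta> j))) \<alpha> \<beta> - vol J (\<lambda>x. g (vec_upd x j (\<alpha> j))) \<alpha> \<beta>"
      using insert.prems(2)[of j "\<lambda>c. vol J (\<lambda>x. g (vec_upd x j c)) \<alpha> \<beta>"] by simp
    also have "\<dots> = vol (insert j J) g \<alpha> \<beta>"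
      by (rule vol_insert[OF insert.hyps(2), symmetric])
    finally show ?case .
  qed
qed

lemma vol_vec_upd_outside:
  fixes g :: "real^'n::finite \<Rightarrow> real"
  assumes "s \<notin> J"
  shows "vol J (\<lambda>x. g (vec_upd x s 1)) a (\<lambda>_. 1) = vol J g a (\<lambda>_. 1)"
  unfolding vol_def
  by (rule sum.cong[OF refl], rule arg_cong[where f="\<lambda>x. _ * g x"]) (use assms in \<open>auto simp: vec_eq_iff\<close>)

text \<open>Inclusion--exclusion over the faces of the box between b and the vertex 1.\<close>
lemma alternating_sum_vol:
  fixes g :: "real^'n::finite \<Rightarrow> real"
  shows "(\<Sum>J\<in>Pow S. (-1) ^ card J * vol J g b (\<lambda>_. 1)) = g (face_point S b)"
proof -
  have "finite S" by simp
  then show ?thesis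
  proof (induction S arbitrary: g rule: finite_induct)
    case empty
    then show ?case by (simp add: vol_def face_point_def)
  next
    case (insert s S)
    have inj: "inj_on (insert s) (Pow S)"
      using insert.hyps by (auto simp: inj_on_def)
    have disj: "Pow S \<inter> insert s ` Pow S = {}"
      using insert.hyps by auto
    have "(\<Sum>J\<in>Pow (insert s S). (-1) ^ card J * vol J g b (\<lambda>_. 1))
       = (\<Sum>J\<in>Pow S. (-1) ^ card J * vol J g b (\<lambda>_. 1))
         + (\<Sum>J\<in>insert s ` Pow S. (-1) ^ card J * vol J g b (\<lambda>_. 1))"
      unfolding Pow_insert by (rule sum.union_disjoint) (use disj in auto)
    also have "(\<Sum>J\<in>insert s ` Pow S. (-1) ^ card J * vol J g b (\<lambda>_. 1))
       = (\<Sum>J\<in>Pow S. - ((-1) ^ card J * vol (insert s J) g b (\<lambda>_. 1)))"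
      unfolding sum.reindex[OF inj] o_def
    proof (rule sum.cong[OF refl])
      fix J assume "J \<in> Pow S"
      then have "finite J" "s \<notin> J"
        using insert.hyps finite_subset by auto
      then show "(-1) ^ card (insert s J) * vol (insert s J) g b (\<lambda>_. 1)
          = - ((-1) ^ card J * vol (insert s J) g b (\<lambda>_. 1))"
        by simp
    qed
    also have "(\<Sum>J\<in>Pow S. (-1) ^ card J * vol J g b (\<lambda>_. 1)) + \<dots>
       = (\<Sum>J\<in>Pow S. (-1) ^ card J * vol J (\<lambda>x. g (vec_upd x s (b s))) b (\<lambda>_. 1))"
      unfolding sum.distrib[symmetric]
    proof (rule sum.cong[OF refl])
      fix J assume "J \<in> Pow S"
      then have sJ: "s \<notin> J"
        using insert.hyps by auto
      show "(-1) ^ card J * vol J g b (\<lambda>_. 1) + - ((-1) ^ card J * vol (insert s J) g b (\<lambda>_. 1))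
          = (-1) ^ card J * vol J (\<lambda>x. g (vec_upd x s (b s))) b (\<lambda>_. 1)"
        unfolding vol_insert[OF sJ] vol_vec_upd_outside[OF sJ] by (simp add: algebra_simps)
    qed
    also have "\<dots> = g (vec_upd (face_point S b) s (b s))"
      by (rule insert.IH)
    also have "vec_upd (face_point S b) s (b s) = face_point (insert s S) b"
      by (auto simp: vec_eq_iff)
    finally show ?case .
  qed
qed

lemma finite_cells: "grid (J::'n::finite set) P \<Longrightarrow> finite (cells J P)"
  by (auto simp: cells_def grid_def intro!: finite_PiE)

lemma grid_Pow: "grid S P \<Longrightarrow> J \<in> Pow S \<Longrightarrow> grid J P"
  by (auto simp: grid_def)

lemma cell_coord:
  assumes "grid J P" "a \<in> cells J P" "j \<in> J"
  shows "a j \<in> P j" "0 \<le> a j" "a j < 1" "nxt (P j) (a j) \<in> P j"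
    "a j < nxt (P j) (a j)" "nxt (P j) (a j) \<le> 1"
proof -
  have P: "finite (P j)" "P j \<subseteq> {0..1}" "1 \<in> P j"
    using assms(1,3) by (auto simp: grid_def)
  show aj: "a j \<in> P j"
    using assms(2,3) by (auto simp: cells_def PiE_iff)
  moreover have "a j \<noteq> 1"
    using assms(2,3) by (auto simp: cells_def PiE_iff)
  ultimately show "0 \<le> a j" "a j < 1"
    using P(2) by force+
  then show "nxt (P j) (a j) \<in> P j" "a j < nxt (P j) (a j)"
    using nxt_props[OF P(1,3)] by auto
  then show "nxt (P j) (a j) \<le> 1"
    using P(2) by auto
qed

lemma face_point_cell_in_cube: "grid J P \<Longrightarrow> a \<in> cells J P \<Longrightarrow> face_point J a \<in> cube"
  by (auto simp: mem_box_cart dest: cell_coord)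

definition grid_ceil :: "real set \<Rightarrow> real \<Rightarrow> real" where
  "grid_ceil P x = Min {y\<in>P. x \<le> y}"

lemma grid_ceil_props:
  assumes "finite P" "1 \<in> P" "x \<le> 1"
  shows "grid_ceil P x \<in> P" "x \<le> grid_ceil P x" "\<And>y. y \<in> P \<Longrightarrow> x \<le> y \<Longrightarrow> grid_ceil P x \<le> y"
proof -
  have ne: "{y\<in>P. x \<le> y} \<noteq> {}" and fin: "finite {y\<in>P. x \<le> y}"
    using assms by auto
  show "grid_ceil P x \<in> P" "x \<le> grid_ceil P x"
    using Min_in[OF fin ne] by (auto simp: grid_ceil_def)
  show "\<And>y. y \<in> P \<Longrightarrow> x \<le> y \<Longrightarrow> grid_ceil P x \<le> y"
    using fin by (auto simp: grid_ceil_def)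
qed

lemma PiE_Collect_ball:
  "{a\<in>PiE J A. \<forall>j\<in>J. Q j (a j)} = PiE J (\<lambda>j. {y\<in>A j. Q j y})"
  by (auto simp: PiE_iff extensional_def)

lemma sum_cell_vol_above:
  fixes g :: "real^'n::finite \<Rightarrow> real"
  assumes P: "grid J P" and x: "\<And>j. j \<in> J \<Longrightarrow> 0 \<le> x$j \<and> x$j \<le> 1"
  shows "(\<Sum>a\<in>cells J P. cell_vol J g P a * (if \<forall>j\<in>J. x$j \<le> a j then 1 else 0))
       = vol J g (\<lambda>j. grid_ceil (P j) (x$j)) (\<lambda>_. 1)"
proof -
  define b where "b = (\<lambda>j. grid_ceil (P j) (x$j))"
  have "(\<Sum>a\<in>cells J P. cell_vol J g P a * (if \<forall>j\<in>J. x$j \<le> a j then 1 else 0))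
      = (\<Sum>a\<in>{a\<in>cells J P. \<forall>j\<in>J. x$j \<le> a j}. cell_vol J g P a)"
    by (simp add: sum.inter_filter[OF finite_cells[OF P]] if_distrib cong: if_cong)
  also have "{a\<in>cells J P. \<forall>j\<in>J. x$j \<le> a j} = PiE J (\<lambda>j. {y\<in>P j - {1}. x$j \<le> y})"
    unfolding cells_def by (rule PiE_Collect_ball)
  also have "\<dots> = PiE J (\<lambda>j. {y\<in>P j. b j \<le> y \<and> y < 1})"
  proof (rule PiE_cong)
    fix j assume j: "j \<in> J"
    have Pj: "finite (P j)" "P j \<subseteq> {0..1}" "1 \<in> P j"
      using P j by (auto simp: grid_def)
    show "{y \<in> P j - {1}. x$j \<le> y} = {y \<in> P j. b j \<le> y \<and> y < 1}"
      using grid_ceil_props[OF Pj(1,3), of "x$j"] x[OF j] Pj(2) unfolding b_def by force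
  qed
  also have "(\<Sum>a\<in>PiE J (\<lambda>j. {y\<in>P j. b j \<le> y \<and> y < 1}). cell_vol J g P a) = vol J g b (\<lambda>_. 1)"
    unfolding cell_vol_def
  proof (rule vol_sum_PiE)
    fix j assume j: "j \<in> J"
    have Pj: "finite (P j)" "P j \<subseteq> {0..1}" "1 \<in> P j"
      using P j by (auto simp: grid_def)
    show "finite {y\<in>P j. b j \<le> y \<and> y < 1}"
      using Pj by auto
    fix f :: "real \<Rightarrow> real"
    show "(\<Sum>y\<in>{y\<in>P j. b j \<le> y \<and> y < 1}. f (nxt (P j) y) - f y) = f 1 - f (b j)"
      by (rule sum_nxt_telescope) (use grid_ceil_props[OF Pj(1,3), of "x$j"] x[OF j] Pj in \<open>auto simp: b_def\<close>)
  qed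
  finally show ?thesis by (simp add: b_def)
qed

lemma alternating_sum_cell_vol_above:
  fixes g :: "real^'n::finite \<Rightarrow> real"
  assumes "grid S P" "\<And>j. j \<in> S \<Longrightarrow> 0 \<le> x$j \<and> x$j \<le> 1"
  shows "(\<Sum>J\<in>Pow S. (-1) ^ card J *
            (\<Sum>a\<in>cells J P. cell_vol J g P a * (if \<forall>j\<in>J. x$j \<le> a j then 1 else 0)))
       = g (face_point S (\<lambda>i. grid_ceil (P i) (x$i)))"
proof -
  have "grid J P" "\<And>j. j \<in> J \<Longrightarrow> 0 \<le> x$j \<and> x$j \<le> 1" if "J \<in> Pow S" for J
    using assms that by (auto simp: grid_def)
  then have "(\<Sum>J\<in>Pow S. (-1) ^ card J *
            (\<Sum>a\<in>cells J P. cell_vol J g P a * (if \<forall>j\<in>J. x$j \<le> a j then 1 else 0)))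
      = (\<Sum>J\<in>Pow S. (-1) ^ card J * vol J g (\<lambda>j. grid_ceil (P j) (x$j)) (\<lambda>_. 1))"
    by (intro sum.cong refl) (simp add: sum_cell_vol_above)
  also have "\<dots> = g (face_point S (\<lambda>i. grid_ceil (P i) (x$i)))"
    by (rule alternating_sum_vol)
  finally show ?thesis .
qed

definition grid_parent :: "'n set \<Rightarrow> ('n \<Rightarrow> real set) \<Rightarrow> ('n \<Rightarrow> real) \<Rightarrow> ('n \<Rightarrow> real)" where
  "grid_parent J P a = restrict (\<lambda>j. Max {y\<in>P j. y \<le> a j}) J"

lemma Max_grid_below_eq_iff:
  assumes "finite P" "0 \<in> P" "1 \<in> P" "P \<subseteq> {0..1}" "c \<in> P" "c < 1" "0 \<le> y" "y < 1"
  shows "Max {z\<in>P. z \<le> y} = c \<longleftrightarrow> c \<le> y \<and> y < nxt P c"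
proof -
  have fin: "finite {z\<in>P. z \<le> y}" and ne: "{z\<in>P. z \<le> y} \<noteq> {}"
    using assms by auto
  have M: "Max {z\<in>P. z \<le> y} \<in> P" "Max {z\<in>P. z \<le> y} \<le> y"
    using Max_in[OF fin ne] by auto
  have Mge: "\<And>z. z \<in> P \<Longrightarrow> z \<le> y \<Longrightarrow> z \<le> Max {z\<in>P. z \<le> y}"
    using fin by auto
  note np = nxt_props[OF assms(1,3,6)]
  show ?thesis
  proof
    assume eq: "Max {z\<in>P. z \<le> y} = c"
    then show "c \<le> y \<and> y < nxt P c"
      using M Mge[OF np(1)] np(2) by force
  next
    assume c: "c \<le> y \<and> y < nxt P c"
    have "\<not> c < Max {z\<in>P. z \<le> y}"
      using np(3)[OF M(1)] M(2) c by force
    then show "Max {z\<in>P. z \<le> y} = c"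
      using Mge[OF assms(5)] c by force
  qed
qed

lemma grid_parent_in_cells:
  assumes "grid J P" "grid J R" "a' \<in> cells J R"
  shows "grid_parent J P a' \<in> cells J P"
  unfolding cells_def PiE_iff
proof (intro conjI ballI)
  show "grid_parent J P a' \<in> extensional J"
    by (simp add: grid_parent_def)
  fix j assume j: "j \<in> J"
  have Pj: "finite (P j)" "0 \<in> P j"
    using assms(1) j by (auto simp: grid_def)
  have a'j: "0 \<le> a' j" "a' j < 1"
    using cell_coord[OF assms(2,3) j] by auto
  have "finite {z\<in>P j. z \<le> a' j}" "{z\<in>P j. z \<le> a' j} \<noteq> {}"
    using Pj a'j by auto
  from Max_in[OF this] show "grid_parent J P a' j \<in> P j - {1}"
    using a'j j by (auto simp: grid_parent_def)
qed

lemma cells_with_grid_parent: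
  assumes P: "grid J P" and R: "grid J R" and sub: "\<And>j. j \<in> J \<Longrightarrow> P j \<subseteq> R j" and a: "a \<in> cells J P"
  shows "{a'\<in>cells J R. grid_parent J P a' = a} = PiE J (\<lambda>j. {y\<in>R j. a j \<le> y \<and> y < nxt (P j) (a j)})"
proof -
  have "{a'\<in>cells J R. grid_parent J P a' = a} = {a'\<in>cells J R. \<forall>j\<in>J. Max {z\<in>P j. z \<le> a' j} = a j}"
    using a by (auto simp: grid_parent_def cells_def PiE_iff extensional_def fun_eq_iff)
  also have "\<dots> = PiE J (\<lambda>j. {y\<in>R j - {1}. Max {z\<in>P j. z \<le> y} = a j})"
    unfolding cells_def by (rule PiE_Collect_ball)
  also have "\<dots> = PiE J (\<lambda>j. {y\<in>R j. a j \<le> y \<and> y < nxt (P j) (a j)})"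
  proof (rule PiE_cong)
    fix j assume j: "j \<in> J"
    have Pj: "finite (P j)" "0 \<in> P j" "1 \<in> P j" "P j \<subseteq> {0..1}"
      using P j by (auto simp: grid_def)
    have Rj: "R j \<subseteq> {0..1}"
      using R j by (auto simp: grid_def)
    note aj = cell_coord[OF P a j]
    show "{y\<in>R j - {1}. Max {z\<in>P j. z \<le> y} = a j} = {y\<in>R j. a j \<le> y \<and> y < nxt (P j) (a j)}"
    proof (intro set_eqI iffI)
      fix y assume y: "y \<in> {y\<in>R j - {1}. Max {z\<in>P j. z \<le> y} = a j}"
      then have "0 \<le> y" "y < 1"
        using Rj by force+
      then show "y \<in> {y\<in>R j. a j \<le> y \<and> y < nxt (P j) (a j)}"
        using y Max_grid_below_eq_iff[OF Pj aj(1,3)] by auto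
    next
      fix y assume y: "y \<in> {y\<in>R j. a j \<le> y \<and> y < nxt (P j) (a j)}"
      then have "0 \<le> y" "y < 1"
        using aj by auto
      then show "y \<in> {y\<in>R j - {1}. Max {z\<in>P j. z \<le> y} = a j}"
        using y Max_grid_below_eq_iff[OF Pj aj(1,3)] by auto
    qed
  qed
  finally show ?thesis .
qed

lemma cell_vol_refine:
  fixes g :: "real^'n::finite \<Rightarrow> real"
  assumes P: "grid J P" and R: "grid J R" and sub: "\<And>j. j \<in> J \<Longrightarrow> P j \<subseteq> R j" and a: "a \<in> cells J P"
  shows "cell_vol J g P a = (\<Sum>a'\<in>{a'\<in>cells J R. grid_parent J P a' = a}. cell_vol J g R a')"
proof -
  have children: "{a'\<in>cells J R. grid_parent J P a' = a} = PiE J (\<lambda>j. {y\<in>R j. a j \<le> y \<and> y < nxt (P j) (a j)})"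
    by (rule cells_with_grid_parent[OF assms])
  show ?thesis
    unfolding children cell_vol_def
  proof (rule vol_sum_PiE[symmetric])
  fix j assume j: "j \<in> J"
  have Rj: "finite (R j)" "R j \<subseteq> {0..1}"
    using R j by (auto simp: grid_def)
  note aj = cell_coord[OF P a j]
  show "finite {y\<in>R j. a j \<le> y \<and> y < nxt (P j) (a j)}"
    using Rj by auto
  fix f :: "real \<Rightarrow> real"
  show "(\<Sum>y\<in>{y\<in>R j. a j \<le> y \<and> y < nxt (P j) (a j)}. f (nxt (R j) y) - f y) = f (nxt (P j) (a j)) - f (a j)"
    by (rule sum_nxt_telescope) (use Rj aj sub[OF j] in auto)
  qed
qed

lemma rs_sum_refine:
  fixes g :: "real^'n::finite \<Rightarrow> real"
  assumes P: "grid J P" and R: "grid J R" and sub: "\<And>j. j \<in> J \<Longrightarrow> P j \<subseteq> R j"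
  shows "rs_sum J f g P \<tau> = (\<Sum>a'\<in>cells J R. f (\<tau> (grid_parent J P a')) * cell_vol J g R a')"
proof -
  have "rs_sum J f g P \<tau>
      = (\<Sum>a\<in>cells J P. \<Sum>a'\<in>{a'\<in>cells J R. grid_parent J P a' = a}. f (\<tau> (grid_parent J P a')) * cell_vol J g R a')"
    unfolding rs_sum_cell_vol
    by (intro sum.cong refl) (simp add: cell_vol_refine[OF P R sub] sum_distrib_left)
  also have "\<dots> = (\<Sum>a'\<in>cells J R. f (\<tau> (grid_parent J P a')) * cell_vol J g R a')"
    by (rule sum.group) (use finite_cells[OF P] finite_cells[OF R] grid_parent_in_cells[OF P R] in auto)
  finally show ?thesis .
qed

section \<open>Riemann--Stieltjes integrals on faces\<close>

lemma rs_tag_in_cube: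
  fixes J :: "'n::finite set"
  assumes "grid J P" "rs_tags J P \<tau>" "a \<in> cells J P"
  shows "\<tau> a \<in> cube"
  unfolding mem_box_cart
proof
  fix i
  show "(0::real^'n)$i \<le> \<tau> a $ i \<and> \<tau> a $ i \<le> (1::real^'n)$i"
  proof (cases "i \<in> J")
    case True
    then show ?thesis
      using cell_coord[OF assms(1,3) True] assms(2,3) by (force simp: rs_tags_def)
  next
    case False
    then show ?thesis
      using assms(2,3) by (auto simp: rs_tags_def)
  qed
qed

lemma rs_tags_face_point: "grid J P \<Longrightarrow> rs_tags J P (face_point J)"
  by (auto simp: rs_tags_def dest: cell_coord)

lemma uniformly_continuous_on_cube_componentwise:
  fixes f :: "real^'n::finite \<Rightarrow> real"
  assumes "continuous_on cube f" "e > 0"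
  obtains d where "d > 0" "\<And>x y. x \<in> cube \<Longrightarrow> y \<in> cube \<Longrightarrow> (\<forall>i. \<bar>x$i - y$i\<bar> \<le> d) \<Longrightarrow> \<bar>f x - f y\<bar> < e"
proof -
  have "uniformly_continuous_on cube f"
    using assms(1) by (intro compact_uniformly_continuous) auto
  then obtain d where d: "d > 0" "\<And>x y. x \<in> cube \<Longrightarrow> y \<in> cube \<Longrightarrow> dist y x < d \<Longrightarrow> dist (f y) (f x) < e"
    unfolding uniformly_continuous_on_def using assms(2) by metis
  define d' where "d' = d / (2 * real CARD('n))"
  show ?thesis
  proof (rule that)
    show "d' > 0"
      using d(1) by (simp add: d'_def)
    fix x y :: "real^'n" assume xy: "x \<in> cube" "y \<in> cube" "\<forall>i. \<bar>x$i - y$i\<bar> \<le> d'"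
    have "dist y x \<le> (\<Sum>i\<in>UNIV. \<bar>(y - x)$i\<bar>)"
      unfolding dist_norm by (rule norm_le_l1_cart)
    also have "\<dots> \<le> (\<Sum>i\<in>(UNIV::'n set). d')"
      by (rule sum_mono) (use xy(3) in \<open>auto simp: abs_minus_commute\<close>)
    also have "\<dots> < d"
      using d(1) by (simp add: d'_def)
    finally have "dist (f y) (f x) < e"
      using d(2)[OF xy(1,2)] by simp
    then show "\<bar>f x - f y\<bar> < e"
      by (simp add: dist_real_def abs_minus_commute)
  qed
qed

definition grid_fine :: "'n set \<Rightarrow> ('n \<Rightarrow> real set) \<Rightarrow> real \<Rightarrow> bool" where
  "grid_fine J P \<delta> \<longleftrightarrow> (\<forall>j\<in>J. \<forall>x\<in>P j - {1}. nxt (P j) x - x < \<delta>)"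

lemma rs_has_iff_grid_fine:
  "rs_has J f g I \<longleftrightarrow>
     (\<forall>\<epsilon>>0. \<exists>\<delta>>0. \<forall>P \<tau>. grid J P \<and> grid_fine J P \<delta> \<and> rs_tags J P \<tau> \<longrightarrow> \<bar>rs_sum J f g P \<tau> - I\<bar> < \<epsilon>)"
  unfolding rs_has_def grid_fine_def by simp

text \<open>Both tags lie in the closed parent cell, whose sides are shorter than \<delta>.\<close>
lemma rs_tags_grid_parent_close:
  fixes J :: "'n::finite set"
  assumes P: "grid J P" and R: "grid J R" and sub: "\<And>j. j \<in> J \<Longrightarrow> P j \<subseteq> R j"
    and tP: "rs_tags J P \<tau>" and tR: "rs_tags J R \<sigma>" and fine: "grid_fine J P \<delta>" and \<delta>: "\<delta> \<ge> 0"
    and a': "a' \<in> cells J R"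
  shows "\<bar>\<tau> (grid_parent J P a') $ i - \<sigma> a' $ i\<bar> \<le> \<delta>"
proof (cases "i \<in> J")
  case True
  define a where "a = grid_parent J P a'"
  have a: "a \<in> cells J P"
    using grid_parent_in_cells[OF P R a'] by (simp add: a_def)
  note ai = cell_coord[OF P a True]
  have a'i: "a' i \<in> R i" "a i \<le> a' i" "a' i < nxt (P i) (a i)"
    using cells_with_grid_parent[OF P R sub a] a' True by (auto simp: a_def PiE_iff)
  have "nxt (R i) (a' i) \<le> nxt (P i) (a i)"
    using cell_coord[OF R a' True] ai(4) sub[OF True] a'i(3) R True
    by (intro nxt_props(3)) (auto simp: grid_def)
  moreover have "nxt (P i) (a i) - a i < \<delta>"
    using fine True ai by (auto simp: grid_fine_def)
  moreover have "a i \<le> \<tau> a $ i" "\<tau> a $ i \<le> nxt (P i) (a i)"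
    using tP a True by (auto simp: rs_tags_def)
  moreover have "a' i \<le> \<sigma> a' $ i" "\<sigma> a' $ i \<le> nxt (R i) (a' i)"
    using tR a' True by (auto simp: rs_tags_def)
  ultimately show ?thesis
    using a'i by (auto simp: a_def)
next
  case False
  then show ?thesis
    using tP grid_parent_in_cells[OF P R a'] tR a' \<delta> by (auto simp: rs_tags_def)
qed

lemma rs_sum_refinement_close:
  fixes g f :: "real^'n::finite \<Rightarrow> real"
  assumes P: "grid J P" and R: "grid J R" and sub: "\<And>j. j \<in> J \<Longrightarrow> P j \<subseteq> R j"
    and tP: "rs_tags J P \<tau>" and tR: "rs_tags J R \<sigma>" and fine: "grid_fine J P \<delta>" and \<delta>: "\<delta> \<ge> 0"
    and close: "\<And>x y. x \<in> cube \<Longrightarrow> y \<in> cube \<Longrightarrow> (\<forall>i. \<bar>x$i - y$i\<bar> \<le> \<delta>) \<Longrightarrow> \<bar>f x - f y\<bar> < \<epsilon>"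
    and V: "grid_variation J g R \<le> V" and \<epsilon>: "\<epsilon> \<ge> 0"
  shows "\<bar>rs_sum J f g P \<tau> - rs_sum J f g R \<sigma>\<bar> \<le> \<epsilon> * V"
proof -
  have tags_close: "\<bar>f (\<tau> (grid_parent J P a')) - f (\<sigma> a')\<bar> \<le> \<epsilon>" if a': "a' \<in> cells J R" for a'
    using close rs_tag_in_cube[OF P tP grid_parent_in_cells[OF P R a']] rs_tag_in_cube[OF R tR a']
      rs_tags_grid_parent_close[OF P R sub tP tR fine \<delta> a'] by (simp add: less_imp_le)
  have "\<bar>rs_sum J f g P \<tau> - rs_sum J f g R \<sigma>\<bar>
      = \<bar>\<Sum>a'\<in>cells J R. (f (\<tau> (grid_parent J P a')) - f (\<sigma> a')) * cell_vol J g R a'\<bar>"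
    using rs_sum_refine[OF P R sub, where f=f and \<tau>=\<tau>] by (simp add: rs_sum_cell_vol left_diff_distrib sum_subtractf)
  also have "\<dots> \<le> (\<Sum>a'\<in>cells J R. \<epsilon> * \<bar>cell_vol J g R a'\<bar>)"
    by (rule order_trans[OF sum_abs sum_mono]) (use tags_close in \<open>auto simp: abs_mult intro: mult_right_mono\<close>)
  also have "\<dots> \<le> \<epsilon> * V"
    using V \<epsilon> by (simp add: grid_variation_def sum_distrib_left[symmetric] mult_left_mono)
  finally show ?thesis .
qed

definition uniform_grid :: "nat \<Rightarrow> real set" where
  "uniform_grid n = (\<lambda>k. real k / real (Suc n)) ` {..Suc n}"

lemma uniform_grid_props: "finite (uniform_grid n)" "uniform_grid n \<subseteq> {0..1}" "0 \<in> uniform_grid n" "1 \<in> uniform_grid n"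
proof -
  show "finite (uniform_grid n)" "uniform_grid n \<subseteq> {0..1}"
    by (auto simp: uniform_grid_def)
  show "0 \<in> uniform_grid n"
    by (force simp: uniform_grid_def)
  have "real (Suc n) / real (Suc n) = 1"
    by simp
  then show "1 \<in> uniform_grid n"
    unfolding uniform_grid_def by (metis atMost_iff image_eqI order_refl)
qed

lemma grid_uniform_grid: "grid J (\<lambda>_. uniform_grid n)"
  using uniform_grid_props by (auto simp: grid_def)

lemma nxt_uniform_grid:
  assumes "x \<in> uniform_grid n - {1}"
  shows "nxt (uniform_grid n) x = x + 1 / real (Suc n)"
proof -
  obtain k where k: "k \<le> Suc n" "x = real k / real (Suc n)"
    using assms by (auto simp: uniform_grid_def)
  then have "k < Suc n"
    using assms by (cases "k = Suc n") auto
  show ?thesis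
  proof (rule nxt_eqI[OF uniform_grid_props(1)])
    have xk: "x + 1 / real (Suc n) = real (Suc k) / real (Suc n)"
      using k by (simp add: field_simps)
    then show "x + 1 / real (Suc n) \<in> uniform_grid n"
      using \<open>k < Suc n\<close> unfolding uniform_grid_def by (metis Suc_leI atMost_iff image_eqI)
    show "x < x + 1 / real (Suc n)"
      by simp
    fix y assume y: "y \<in> uniform_grid n" "x < y"
    then obtain l where l: "y = real l / real (Suc n)"
      by (auto simp: uniform_grid_def)
    then have "k < l"
      using y(2) k(2) by (simp add: divide_less_cancel)
    then show "x + 1 / real (Suc n) \<le> y"
      using xk l by (simp add: divide_right_mono)
  qed
qed

lemma eventually_grid_fine_uniform_grid:
  assumes "\<delta> > 0"
  shows "eventually (\<lambda>n. grid_fine J (\<lambda>_. uniform_grid n) \<delta>) sequentially"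
proof -
  obtain N :: nat where N: "1 / real (Suc N) < \<delta>"
    using nat_approx_posE[OF assms] by blast
  have "grid_fine J (\<lambda>_. uniform_grid n) \<delta>" if "n \<ge> N" for n
  proof -
    have "1 / real (Suc n) \<le> 1 / real (Suc N)"
      using that by (simp add: frac_le)
    then show ?thesis
      using N by (auto simp: grid_fine_def nxt_uniform_grid)
  qed
  then show ?thesis
    unfolding eventually_sequentially by blast
qed

lemma rs_has_uniform_grid_tendsto:
  assumes "rs_has J f g I"
  shows "(\<lambda>n. rs_sum J f g (\<lambda>_. uniform_grid n) (face_point J)) \<longlonglongrightarrow> I"
proof (rule tendstoI)
  fix e :: real assume "e > 0"
  then obtain d where d: "d > 0"
    "\<And>P \<tau>. grid J P \<Longrightarrow> grid_fine J P d \<Longrightarrow> rs_tags J P \<tau> \<Longrightarrow> \<bar>rs_sum J f g P \<tau> - I\<bar> < e"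
    using assms unfolding rs_has_iff_grid_fine by metis
  show "eventually (\<lambda>n. dist (rs_sum J f g (\<lambda>_. uniform_grid n) (face_point J)) I < e) sequentially"
    using eventually_grid_fine_uniform_grid[OF d(1), of J]
  proof eventually_elim
    case (elim n)
    then show ?case
      using d(2)[OF grid_uniform_grid elim rs_tags_face_point[OF grid_uniform_grid]] by (simp add: dist_real_def)
  qed
qed

lemma rs_has_unique:
  assumes "rs_has J f g I1" "rs_has J f g I2"
  shows "I1 = I2"
  using rs_has_uniform_grid_tendsto[OF assms(1)] rs_has_uniform_grid_tendsto[OF assms(2)] by (rule LIMSEQ_unique)

lemma rs_int_eqI:
  assumes "rs_has J f g I"
  shows "rs_int J f g = I"
  unfolding rs_int_def
proof (rule the_equality)
  fix I' assume "rs_has J f g I'"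
  then show "I' = I"
    using assms by (rule rs_has_unique)
qed (fact assms)

lemma grid_variation_nonneg: "0 \<le> grid_variation J g P"
  by (simp add: grid_variation_def sum_nonneg)

lemma rs_sum_Cauchy:
  fixes f g :: "real^'n::finite \<Rightarrow> real"
  assumes f: "continuous_on cube f" and V: "\<And>P. grid J P \<Longrightarrow> grid_variation J g P \<le> V"
    and e: "e > 0"
  obtains \<delta> where "\<delta> > 0"
    "\<And>P \<tau> Q \<sigma>. grid J P \<Longrightarrow> grid_fine J P \<delta> \<Longrightarrow> rs_tags J P \<tau> \<Longrightarrow>
       grid J Q \<Longrightarrow> grid_fine J Q \<delta> \<Longrightarrow> rs_tags J Q \<sigma> \<Longrightarrow>
       \<bar>rs_sum J f g P \<tau> - rs_sum J f g Q \<sigma>\<bar> < e"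
proof -
  have V0: "V \<ge> 0"
    by (rule order_trans[OF grid_variation_nonneg V[OF grid_uniform_grid]])
  define \<epsilon> where "\<epsilon> = e / (2 * V + 2)"
  have \<epsilon>: "\<epsilon> > 0" "2 * \<epsilon> * V < e"
    using e V0 by (simp_all add: \<epsilon>_def field_simps)
  obtain d where d: "d > 0" "\<And>x y. x \<in> cube \<Longrightarrow> y \<in> cube \<Longrightarrow> (\<forall>i. \<bar>x$i - y$i\<bar> \<le> d) \<Longrightarrow> \<bar>f x - f y\<bar> < \<epsilon>"
    using uniformly_continuous_on_cube_componentwise[OF f \<epsilon>(1)] by blast
  show ?thesis
  proof (rule that[OF d(1)])
    fix P \<tau> Q \<sigma>
    assume P: "grid J P" "grid_fine J P d" "rs_tags J P \<tau>" and Q: "grid J Q" "grid_fine J Q d" "rs_tags J Q \<sigma>"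
    define R where "R j = P j \<union> Q j" for j
    have R: "grid J R"
      using P(1) Q(1) by (auto simp: grid_def R_def)
    have "\<bar>rs_sum J f g P \<tau> - rs_sum J f g R (face_point J)\<bar> \<le> \<epsilon> * V"
      using P d \<epsilon>(1)
      by (intro rs_sum_refinement_close[OF _ R _ _ rs_tags_face_point[OF R]] V[OF R]) (auto simp: R_def)
    moreover have "\<bar>rs_sum J f g Q \<sigma> - rs_sum J f g R (face_point J)\<bar> \<le> \<epsilon> * V"
      using Q d \<epsilon>(1)
      by (intro rs_sum_refinement_close[OF _ R _ _ rs_tags_face_point[OF R]] V[OF R]) (auto simp: R_def)
    ultimately show "\<bar>rs_sum J f g P \<tau> - rs_sum J f g Q \<sigma>\<bar> < e"
      using \<epsilon>(2) by linarith
  qed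
qed

lemma rs_has_rs_int:
  fixes f g :: "real^'n::finite \<Rightarrow> real"
  assumes f: "continuous_on cube f" and V: "\<And>P. grid J P \<Longrightarrow> grid_variation J g P \<le> V"
  shows "rs_has J f g (rs_int J f g)"
proof -
  define s where "s n = rs_sum J f g (\<lambda>_. uniform_grid n) (face_point J)" for n
  note uniform = grid_uniform_grid rs_tags_face_point[OF grid_uniform_grid]
  have "Cauchy s"
  proof (rule CauchyI)
    fix e :: real assume "e > 0"
    then obtain \<delta> where \<delta>: "\<delta> > 0" "\<And>P \<tau> Q \<sigma>. grid J P \<Longrightarrow> grid_fine J P \<delta> \<Longrightarrow> rs_tags J P \<tau> \<Longrightarrow>
       grid J Q \<Longrightarrow> grid_fine J Q \<delta> \<Longrightarrow> rs_tags J Q \<sigma> \<Longrightarrow> \<bar>rs_sum J f g P \<tau> - rs_sum J f g Q \<sigma>\<bar> < e"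
      using rs_sum_Cauchy[OF f V] by metis
    obtain N where N: "\<forall>n\<ge>N. grid_fine J (\<lambda>_. uniform_grid n) \<delta>"
      using eventually_grid_fine_uniform_grid[OF \<delta>(1), of J] unfolding eventually_sequentially by blast
    show "\<exists>M. \<forall>m\<ge>M. \<forall>n\<ge>M. norm (s m - s n) < e"
    proof (intro exI[of _ N] allI impI)
      fix m n assume "m \<ge> N" "n \<ge> N"
      then show "norm (s m - s n) < e"
        using \<delta>(2)[OF uniform(1) _ uniform(2) uniform(1) _ uniform(2)] N by (simp add: s_def)
    qed
  qed
  then obtain I where I: "s \<longlonglongrightarrow> I"
    using Cauchy_convergent_iff convergent_def by blast
  have "rs_has J f g I"
    unfolding rs_has_iff_grid_fine
  proof (intro allI impI)
    fix e :: real assume "e > 0"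
    then obtain \<delta> where \<delta>: "\<delta> > 0" "\<And>P \<tau> Q \<sigma>. grid J P \<Longrightarrow> grid_fine J P \<delta> \<Longrightarrow> rs_tags J P \<tau> \<Longrightarrow>
       grid J Q \<Longrightarrow> grid_fine J Q \<delta> \<Longrightarrow> rs_tags J Q \<sigma> \<Longrightarrow> \<bar>rs_sum J f g P \<tau> - rs_sum J f g Q \<sigma>\<bar> < e / 2"
      using rs_sum_Cauchy[OF f V, of "e / 2"] by auto
    have "eventually (\<lambda>n. grid_fine J (\<lambda>_. uniform_grid n) \<delta> \<and> \<bar>s n - I\<bar> < e / 2) sequentially"
      using eventually_grid_fine_uniform_grid[OF \<delta>(1), of J] tendstoD[OF I half_gt_zero[OF \<open>e > 0\<close>]]
      by eventually_elim (auto simp: dist_real_def)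
    then obtain n where n: "grid_fine J (\<lambda>_. uniform_grid n) \<delta>" "\<bar>s n - I\<bar> < e / 2"
      unfolding eventually_sequentially by blast
    have "\<bar>rs_sum J f g P \<tau> - I\<bar> < e" if "grid J P \<and> grid_fine J P \<delta> \<and> rs_tags J P \<tau>" for P \<tau>
      using \<delta>(2)[of P \<tau>, OF _ _ _ uniform(1) n(1) uniform(2)] that n(2) unfolding s_def by linarith
    then show "\<exists>\<delta>>0. \<forall>P \<tau>. grid J P \<and> grid_fine J P \<delta> \<and> rs_tags J P \<tau> \<longrightarrow> \<bar>rs_sum J f g P \<tau> - I\<bar> < e"
      using \<delta>(1) by blast
  qed
  then show ?thesis
    by (simp add: rs_int_eqI)
qed

lemma rs_sum_linear:
  "rs_sum J (\<lambda>u. a * f1 u + b * f2 u) g P \<tau> = a * rs_sum J f1 g P \<tau> + b * rs_sum J f2 g P \<tau>"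
  unfolding rs_sum_def by (simp add: sum.distrib sum_distrib_left algebra_simps)

lemma rs_has_linear:
  assumes "rs_has J f1 g I1" "rs_has J f2 g I2"
  shows "rs_has J (\<lambda>u. a * f1 u + b * f2 u) g (a * I1 + b * I2)"
  unfolding rs_has_iff_grid_fine
proof (intro allI impI)
  fix e :: real assume e: "e > 0"
  define e' where "e' = e / (\<bar>a\<bar> + \<bar>b\<bar> + 1)"
  have e': "e' > 0" "(\<bar>a\<bar> + \<bar>b\<bar>) * e' < e"
    using e by (simp_all add: e'_def add_pos_nonneg field_simps)
  obtain d1 where d1: "d1 > 0" "\<And>P \<tau>. grid J P \<and> grid_fine J P d1 \<and> rs_tags J P \<tau> \<Longrightarrow> \<bar>rs_sum J f1 g P \<tau> - I1\<bar> < e'"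
    using assms(1) e' unfolding rs_has_iff_grid_fine by metis
  obtain d2 where d2: "d2 > 0" "\<And>P \<tau>. grid J P \<and> grid_fine J P d2 \<and> rs_tags J P \<tau> \<Longrightarrow> \<bar>rs_sum J f2 g P \<tau> - I2\<bar> < e'"
    using assms(2) e' unfolding rs_has_iff_grid_fine by metis
  show "\<exists>\<delta>>0. \<forall>P \<tau>. grid J P \<and> grid_fine J P \<delta> \<and> rs_tags J P \<tau> \<longrightarrow>
      \<bar>rs_sum J (\<lambda>u. a * f1 u + b * f2 u) g P \<tau> - (a * I1 + b * I2)\<bar> < e"
  proof (intro exI[of _ "min d1 d2"] conjI allI impI)
    show "min d1 d2 > 0"
      using d1 d2 by simp
    fix P \<tau> assume H: "grid J P \<and> grid_fine J P (min d1 d2) \<and> rs_tags J P \<tau>"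
    then have h1: "\<bar>rs_sum J f1 g P \<tau> - I1\<bar> < e'" and h2: "\<bar>rs_sum J f2 g P \<tau> - I2\<bar> < e'"
      using d1(2) d2(2) by (auto simp: grid_fine_def)
    have "\<bar>rs_sum J (\<lambda>u. a * f1 u + b * f2 u) g P \<tau> - (a * I1 + b * I2)\<bar>
        = \<bar>a * (rs_sum J f1 g P \<tau> - I1) + b * (rs_sum J f2 g P \<tau> - I2)\<bar>"
      by (simp add: rs_sum_linear algebra_simps)
    also have "\<dots> \<le> \<bar>a\<bar> * \<bar>rs_sum J f1 g P \<tau> - I1\<bar> + \<bar>b\<bar> * \<bar>rs_sum J f2 g P \<tau> - I2\<bar>"
      by (metis abs_mult abs_triangle_ineq)
    also have "\<dots> \<le> (\<bar>a\<bar> + \<bar>b\<bar>) * e'"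
      using h1 h2 by (simp add: distrib_right add_mono mult_left_mono)
    finally show "\<bar>rs_sum J (\<lambda>u. a * f1 u + b * f2 u) g P \<tau> - (a * I1 + b * I2)\<bar> < e"
      using e'(2) by linarith
  qed
qed

lemma rs_sum_bound:
  fixes f g :: "real^'n::finite \<Rightarrow> real"
  assumes "grid J P" "rs_tags J P \<tau>" "\<And>x. x \<in> cube \<Longrightarrow> \<bar>f x\<bar> \<le> B" "grid_variation J g P \<le> V"
  shows "\<bar>rs_sum J f g P \<tau>\<bar> \<le> B * V"
proof -
  have B: "B \<ge> 0"
    using assms(3)[of 0] by (simp add: mem_box_cart)
  have "\<bar>rs_sum J f g P \<tau>\<bar> \<le> (\<Sum>a\<in>cells J P. B * \<bar>cell_vol J g P a\<bar>)"
    unfolding rs_sum_cell_vol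
    by (rule order_trans[OF sum_abs sum_mono])
      (use assms(3) rs_tag_in_cube[OF assms(1,2)] in \<open>auto simp: abs_mult intro: mult_right_mono\<close>)
  also have "\<dots> \<le> B * V"
    using assms(4) B by (simp add: grid_variation_def sum_distrib_left[symmetric] mult_left_mono)
  finally show ?thesis .
qed

lemma rs_has_bound:
  fixes f g :: "real^'n::finite \<Rightarrow> real"
  assumes "rs_has J f g I" "\<And>x. x \<in> cube \<Longrightarrow> \<bar>f x\<bar> \<le> B"
    and "\<And>P. grid J P \<Longrightarrow> grid_variation J g P \<le> V"
  shows "\<bar>I\<bar> \<le> B * V"
proof (rule LIMSEQ_le_const2)
  show "(\<lambda>n. \<bar>rs_sum J f g (\<lambda>_. uniform_grid n) (face_point J)\<bar>) \<longlonglongrightarrow> \<bar>I\<bar>"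
    by (intro tendsto_rabs rs_has_uniform_grid_tendsto assms(1))
  show "\<exists>N. \<forall>n\<ge>N. \<bar>rs_sum J f g (\<lambda>_. uniform_grid n) (face_point J)\<bar> \<le> B * V"
    using rs_sum_bound[OF grid_uniform_grid rs_tags_face_point[OF grid_uniform_grid], where f=f and B=B and g=g and V=V]
      assms(2,3) grid_uniform_grid by blast
qed

section \<open>Integrals against a distribution on the cube\<close>

lemma cdf_ofD:
  assumes "cdf_of F \<mu>"
  shows "prob_space \<mu>" "sets \<mu> = sets borel" "space \<mu> = UNIV" "measure \<mu> cube = 1"
    "\<And>u. u \<in> cube \<Longrightarrow> F u = measure \<mu> (cbox 0 u)"
proof -
  show "prob_space \<mu>" "sets \<mu> = sets borel"
    using assms by (auto simp: cdf_of_def)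
  then show "space \<mu> = UNIV"
    by (metis sets_eq_imp_space_eq space_borel)
  show "measure \<mu> cube = 1" "\<And>u. u \<in> cube \<Longrightarrow> F u = measure \<mu> (cbox 0 u)"
    using assms by (auto simp: cdf_of_def measure_def)
qed

lemma cdf_of_cdf_measure: "G \<in> cdfs \<Longrightarrow> cdf_of G (cdf_measure G)"
  unfolding cdfs_def cdf_measure_def by (auto intro: someI_ex)

lemma cdf_of_abs_le_1:
  assumes "cdf_of G \<mu>" "u \<in> cube"
  shows "\<bar>G u\<bar> \<le> 1"
proof -
  interpret prob_space \<mu>
    by (rule cdf_ofD(1)[OF assms(1)])
  show ?thesis
    using cdf_ofD(5)[OF assms] by simp
qed

lemma borel_measurable_cdf_of:
  fixes f :: "real^'n::finite \<Rightarrow> real"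
  assumes "cdf_of F \<mu>" "f \<in> borel_measurable borel"
  shows "f \<in> borel_measurable \<mu>"
proof -
  have "\<mu> \<rightarrow>\<^sub>M (borel::real measure) = borel \<rightarrow>\<^sub>M borel"
    by (rule measurable_cong_sets[OF cdf_ofD(2)[OF assms(1)] refl])
  then show ?thesis
    using assms(2) by simp
qed

lemma integrable_indicator_cube_bounded:
  fixes f :: "real^'n::finite \<Rightarrow> real"
  assumes \<mu>: "cdf_of F \<mu>" and f: "(\<lambda>x. indicator cube x * f x) \<in> borel_measurable borel"
    and B: "\<And>x. x \<in> cube \<Longrightarrow> \<bar>f x\<bar> \<le> B"
  shows "integrable \<mu> (\<lambda>x. indicator cube x * f x)"
proof -
  interpret prob_space \<mu>
    by (rule cdf_ofD(1)[OF \<mu>])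
  show ?thesis
  proof (rule integrableI_bounded_set[where A=cube and B=B])
    show "cube \<in> sets \<mu>"
      using cdf_ofD(2)[OF \<mu>] by simp
    show "(\<lambda>x. indicator cube x * f x) \<in> borel_measurable \<mu>"
      by (rule borel_measurable_cdf_of[OF \<mu> f])
  qed (use B in \<open>auto simp: less_top[symmetric]\<close>)
qed

lemma continuous_on_cube_bound:
  fixes f :: "real^'n::finite \<Rightarrow> real"
  assumes "continuous_on cube f"
  obtains B where "B \<ge> 0" "\<And>u. u \<in> cube \<Longrightarrow> \<bar>f u\<bar> \<le> B"
proof -
  obtain B where B: "\<And>x. x \<in> cube \<Longrightarrow> norm (f x) \<le> B"
    using compact_imp_bounded[OF compact_continuous_image[OF assms compact_cbox]]
    by (auto simp: bounded_iff)
  have "(0::real^'n) \<in> cube"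
    by (simp add: mem_box_cart)
  then have "B \<ge> 0"
    using B[of 0] by (meson norm_ge_zero order_trans)
  then show ?thesis
    using B that by auto
qed

lemma integrable_indicator_cube_continuous:
  fixes f :: "real^'n::finite \<Rightarrow> real"
  assumes \<mu>: "cdf_of F \<mu>" and f: "continuous_on cube f"
  shows "integrable \<mu> (\<lambda>x. indicator cube x * f x)"
proof -
  obtain B where "\<And>x. x \<in> cube \<Longrightarrow> \<bar>f x\<bar> \<le> B"
    using continuous_on_cube_bound[OF f] by blast
  moreover have "(\<lambda>x. indicator cube x * f x) \<in> borel_measurable borel"
    using borel_measurable_continuous_on_indicator[OF _ f] by simp
  ultimately show ?thesis
    using integrable_indicator_cube_bounded[OF \<mu>] by blast
qed

lemma integral_restrict_cube:
  fixes f :: "real^'n::finite \<Rightarrow> real"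
  assumes "cdf_of G \<mu>"
  shows "(LINT x | restrict_space \<mu> cube. f x) = (LINT x | \<mu>. indicator cube x * f x)"
  using cdf_ofD(2,3)[OF assms] by (subst integral_restrict_space) auto

lemma abs_integral_restrict_cube_le:
  fixes f :: "real^'n::finite \<Rightarrow> real"
  assumes \<mu>: "cdf_of G \<mu>" and f: "integrable \<mu> (\<lambda>x. indicator cube x * f x)"
    and c: "\<And>x. x \<in> cube \<Longrightarrow> \<bar>f x\<bar> \<le> c"
  shows "\<bar>LINT x | restrict_space \<mu> cube. f x\<bar> \<le> c"
proof -
  interpret prob_space \<mu>
    by (rule cdf_ofD(1)[OF \<mu>])
  have cube: "cube \<in> sets \<mu>"
    using cdf_ofD(2)[OF \<mu>] by simp
  have "\<bar>LINT x | \<mu>. indicator cube x * f x\<bar> \<le> (LINT x | \<mu>. c * indicator cube x)"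
  proof (rule integral_abs_bound_integral[OF f])
    show "integrable \<mu> (\<lambda>x. c * indicator cube x)"
      using cube by (auto simp: less_top[symmetric])
    fix x show "\<bar>indicator cube x * f x\<bar> \<le> c * indicator cube x"
      using c[of x] by (cases "x \<in> cube") auto
  qed
  also have "\<dots> = c"
    using cdf_ofD(3,4)[OF \<mu>] cube by simp
  finally show ?thesis
    by (simp add: integral_restrict_cube[OF \<mu>])
qed

text \<open>Summation by parts: on the cube this combination of indicators of boxes anchored at 0 equals g
  at the upper grid corner of x, while its integral against a law only involves the cdf at grid points.\<close>
definition grid_step :: "'n::finite set \<Rightarrow> (real^'n \<Rightarrow> real) \<Rightarrow> ('n \<Rightarrow> real set) \<Rightarrow> real^'n \<Rightarrow> real" where
  "grid_step S g P x = (\<Sum>J\<in>Pow S. (-1) ^ card J *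
      (\<Sum>a\<in>cells J P. cell_vol J g P a * indicator (cbox 0 (face_point J a)) x))"

definition step_integral :: "'n::finite set \<Rightarrow> (real^'n \<Rightarrow> real) \<Rightarrow> ('n \<Rightarrow> real set) \<Rightarrow> (real^'n \<Rightarrow> real) \<Rightarrow> real" where
  "step_integral S g P F = (\<Sum>J\<in>Pow S. (-1) ^ card J * (\<Sum>a\<in>cells J P. cell_vol J g P a * F (face_point J a)))"

lemma grid_step_in_cube:
  fixes g :: "real^'n::finite \<Rightarrow> real"
  assumes P: "grid S P" and x: "x \<in> cube"
  shows "grid_step S g P x = g (face_point S (\<lambda>i. grid_ceil (P i) (x$i)))"
proof -
  have x01: "\<And>i. 0 \<le> x$i \<and> x$i \<le> 1"
    using x by (simp add: mem_box_cart)
  have "indicator (cbox 0 (face_point J a)) x = (if \<forall>j\<in>J. x$j \<le> a j then 1 else (0::real))" for J a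
    using x01 by (auto simp: indicator_def mem_box_cart)
  then have "grid_step S g P x = (\<Sum>J\<in>Pow S. (-1) ^ card J *
      (\<Sum>a\<in>cells J P. cell_vol J g P a * (if \<forall>j\<in>J. x$j \<le> a j then 1 else 0)))"
    by (simp add: grid_step_def)
  also have "\<dots> = g (face_point S (\<lambda>i. grid_ceil (P i) (x$i)))"
    by (rule alternating_sum_cell_vol_above[OF P]) (use x01 in auto)
  finally show ?thesis .
qed

lemma grid_step_outside_cube:
  fixes g :: "real^'n::finite \<Rightarrow> real"
  assumes P: "grid S P" and x: "x \<notin> cube"
  shows "grid_step S g P x = 0"
proof -
  have "indicator (cbox 0 (face_point J a)) x = (0::real)" if "J \<in> Pow S" "a \<in> cells J P" for J a
  proof -
    have "cbox 0 (face_point J a) \<subseteq> cube"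
      using face_point_cell_in_cube[OF grid_Pow[OF P that(1)] that(2)]
      by (auto simp: mem_box_cart) (meson order_trans)
    then show ?thesis
      using x by (auto simp: indicator_def)
  qed
  then show ?thesis
    by (simp add: grid_step_def)
qed

lemma integral_grid_step:
  fixes g :: "real^'n::finite \<Rightarrow> real"
  assumes \<mu>: "cdf_of F \<mu>" and P: "grid S P"
  shows "integrable \<mu> (grid_step S g P)" "integral\<^sup>L \<mu> (grid_step S g P) = step_integral S g P F"
proof -
  interpret prob_space \<mu>
    by (rule cdf_ofD(1)[OF \<mu>])
  have box: "cbox 0 u \<in> sets \<mu>" for u :: "real^'n"
    using cdf_ofD(2)[OF \<mu>] by simp
  show "integrable \<mu> (grid_step S g P)"
    unfolding grid_step_def using box by (auto simp: less_top[symmetric])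
  have "measure \<mu> (cbox 0 (face_point J a)) = F (face_point J a)" if "J \<in> Pow S" "a \<in> cells J P" for J a
    using cdf_ofD(5)[OF \<mu> face_point_cell_in_cube[OF grid_Pow[OF P that(1)] that(2)]] by simp
  then show "integral\<^sup>L \<mu> (grid_step S g P) = step_integral S g P F"
    unfolding grid_step_def step_integral_def using box cdf_ofD(3)[OF \<mu>]
    by (subst Bochner_Integration.integral_sum) (auto simp: less_top[symmetric] intro!: sum.cong)
qed

lemma integral_approx_step_integral:
  fixes f g :: "real^'n::finite \<Rightarrow> real"
  assumes \<mu>: "cdf_of F \<mu>" and P: "grid S P"
    and f: "integrable \<mu> (\<lambda>x. indicator cube x * f x)"
    and close: "\<And>x. x \<in> cube \<Longrightarrow> \<bar>f x - g (face_point S (\<lambda>i. grid_ceil (P i) (x$i)))\<bar> \<le> \<epsilon>"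
  shows "\<bar>(LINT x | restrict_space \<mu> cube. f x) - step_integral S g P F\<bar> \<le> \<epsilon>"
proof -
  note step = integral_grid_step[OF \<mu> P, of g]
  have restrict: "(\<lambda>x. indicator cube x * (f x - grid_step S g P x)) = (\<lambda>x. indicator cube x * f x - grid_step S g P x)"
    using grid_step_outside_cube[OF P] by (auto simp: indicator_def fun_eq_iff)
  have "(LINT x | restrict_space \<mu> cube. f x) - step_integral S g P F
      = (LINT x | restrict_space \<mu> cube. f x - grid_step S g P x)"
    unfolding integral_restrict_cube[OF \<mu>] step(2)[symmetric] restrict using f step(1) by simp
  also have "\<bar>\<dots>\<bar> \<le> \<epsilon>"
    by (rule abs_integral_restrict_cube_le[OF \<mu>]) (use restrict f step(1) close grid_step_in_cube[OF P] in simp_all)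
  finally show ?thesis .
qed

lemma grid_ceil_uniform_grid:
  assumes "0 \<le> x" "x \<le> 1"
  shows "x \<le> grid_ceil (uniform_grid n) x" "grid_ceil (uniform_grid n) x \<le> x + 1 / real (Suc n)"
proof -
  note ceil = grid_ceil_props[OF uniform_grid_props(1,4) assms(2)]
  show "x \<le> grid_ceil (uniform_grid n) x"
    by (rule ceil(2))
  define k where "k = nat \<lceil>real (Suc n) * x\<rceil>"
  have k: "real k = of_int \<lceil>real (Suc n) * x\<rceil>"
    using assms unfolding k_def by simp
  have "k \<le> Suc n"
    using assms unfolding k_def by (simp add: nat_le_iff ceiling_le_iff mult_left_le)
  then have "real k / real (Suc n) \<in> uniform_grid n"
    unfolding uniform_grid_def by auto
  moreover have "x \<le> real k / real (Suc n)"
    using k by (simp add: le_divide_eq mult.commute)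
  ultimately have "grid_ceil (uniform_grid n) x \<le> real k / real (Suc n)"
    by (rule ceil(3))
  also have "\<dots> \<le> (real (Suc n) * x + 1) / real (Suc n)"
    using k by (intro divide_right_mono) linarith+
  also have "\<dots> = x + 1 / real (Suc n)"
    by (simp add: field_simps)
  finally show "grid_ceil (uniform_grid n) x \<le> x + 1 / real (Suc n)" .
qed

lemma eventually_uniform_grid_step_close:
  fixes g :: "real^'n::finite \<Rightarrow> real"
  assumes g: "continuous_on cube g" and coordinatewise: "\<And>x y. (\<And>j. j \<in> S \<Longrightarrow> x$j = y$j) \<Longrightarrow> g x = g y"
    and e: "e > 0"
  shows "eventually (\<lambda>n. \<forall>x\<in>cube. \<bar>g x - g (face_point S (\<lambda>i. grid_ceil (uniform_grid n) (x$i)))\<bar> \<le> e) sequentially"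
proof -
  obtain d where d: "d > 0" "\<And>x y. x \<in> cube \<Longrightarrow> y \<in> cube \<Longrightarrow> (\<forall>i. \<bar>x$i - y$i\<bar> \<le> d) \<Longrightarrow> \<bar>g x - g y\<bar> < e"
    using uniformly_continuous_on_cube_componentwise[OF g e] by blast
  obtain N :: nat where N: "1 / real (Suc N) < d"
    using nat_approx_posE[OF d(1)] by blast
  have "\<bar>g x - g (face_point S (\<lambda>i. grid_ceil (uniform_grid n) (x$i)))\<bar> \<le> e" if n: "n \<ge> N" and x: "x \<in> cube" for n x
  proof -
    define c where "c i = grid_ceil (uniform_grid n) (x$i)" for i
    have x01: "0 \<le> x$i" "x$i \<le> 1" for i
      using x by (auto simp: mem_box_cart)
    have "1 / real (Suc n) \<le> 1 / real (Suc N)"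
      using n by (simp add: frac_le)
    then have c: "x$i \<le> c i" "c i \<le> x$i + d" for i
      using grid_ceil_uniform_grid[OF x01(1)[of i] x01(2)[of i], of n] N unfolding c_def by auto
    have "c i \<in> uniform_grid n" for i
      using grid_ceil_props(1)[OF uniform_grid_props(1,4) x01(2)] by (simp add: c_def)
    then have "c i \<le> 1" for i
      using uniform_grid_props(2) by (meson atLeastAtMost_iff subsetD)
    moreover have "0 \<le> c i" for i
      using x01(1)[of i] c(1)[of i] by linarith
    ultimately have "face_point S (\<lambda>i. x$i) \<in> cube" "face_point S c \<in> cube"
      using x01 by (auto simp: mem_box_cart)
    moreover have "\<bar>face_point S (\<lambda>i. x$i) $ i - face_point S c $ i\<bar> \<le> d" for i
      using c(1)[of i] c(2)[of i] d(1) by (cases "i \<in> S") auto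
    then have "\<forall>i. \<bar>face_point S (\<lambda>i. x$i) $ i - face_point S c $ i\<bar> \<le> d"
      by blast
    ultimately have "\<bar>g (face_point S (\<lambda>i. x$i)) - g (face_point S c)\<bar> < e"
      by (rule d(2))
    moreover have "g x = g (face_point S (\<lambda>i. x$i))"
      by (rule coordinatewise) simp
    ultimately show ?thesis
      by (simp add: c_def[abs_def])
  qed
  then show ?thesis
    unfolding eventually_sequentially by blast
qed

lemma step_integral_tendsto:
  fixes g :: "real^'n::finite \<Rightarrow> real"
  assumes P: "grid S P" and lim: "\<And>u. u \<in> cube \<Longrightarrow> (\<lambda>n. F n u) \<longlonglongrightarrow> F' u"
  shows "(\<lambda>n. step_integral S g P (F n)) \<longlonglongrightarrow> step_integral S g P F'"
  unfolding step_integral_def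
  by (intro tendsto_sum tendsto_mult_left lim face_point_cell_in_cube[OF grid_Pow[OF P]])

text \<open>The integrals are uniformly approximated by step integrals, which involve only finitely many
  values of the cdfs.\<close>
lemma integral_tendsto_of_cdf_tendsto:
  fixes g :: "real^'n::finite \<Rightarrow> real"
  assumes \<mu>n: "\<And>n. cdf_of (F n) (\<mu> n)" and \<mu>: "cdf_of F' \<mu>'"
    and lim: "\<And>u. u \<in> cube \<Longrightarrow> (\<lambda>n. F n u) \<longlonglongrightarrow> F' u" and g: "continuous_on cube g"
  shows "(\<lambda>n. LINT x | restrict_space (\<mu> n) cube. g x) \<longlonglongrightarrow> (LINT x | restrict_space \<mu>' cube. g x)"
proof (rule tendstoI)
  fix e :: real assume e: "e > 0"
  have coordinatewise: "g x = g y" if "\<And>j. j \<in> UNIV \<Longrightarrow> x$j = y$j" for x y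
  proof -
    have "x = y"
      using that by (simp add: vec_eq_iff)
    then show ?thesis by simp
  qed
  have e3: "e / 3 > 0"
    using e by simp
  have "eventually (\<lambda>m. \<forall>x\<in>cube. \<bar>g x - g (face_point UNIV (\<lambda>i. grid_ceil (uniform_grid m) (x$i)))\<bar> \<le> e / 3)
      sequentially"
    by (rule eventually_uniform_grid_step_close[OF g coordinatewise e3])
  then obtain m where m: "\<forall>x\<in>cube. \<bar>g x - g (face_point UNIV (\<lambda>i. grid_ceil (uniform_grid m) (x$i)))\<bar> \<le> e / 3"
    unfolding eventually_sequentially by blast
  define P where "P = (\<lambda>_::'n. uniform_grid m)"
  have P: "grid UNIV P"
    unfolding P_def by (rule grid_uniform_grid)
  have close: "\<And>x. x \<in> cube \<Longrightarrow> \<bar>g x - g (face_point UNIV (\<lambda>i. grid_ceil (P i) (x$i)))\<bar> \<le> e / 3"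
    using m by (simp add: P_def)
  have approx_n: "\<bar>(LINT x | restrict_space (\<mu> n) cube. g x) - step_integral UNIV g P (F n)\<bar> \<le> e / 3" for n
    by (rule integral_approx_step_integral[OF \<mu>n P integrable_indicator_cube_continuous[OF \<mu>n g] close])
  have approx: "\<bar>(LINT x | restrict_space \<mu>' cube. g x) - step_integral UNIV g P F'\<bar> \<le> e / 3"
    by (rule integral_approx_step_integral[OF \<mu> P integrable_indicator_cube_continuous[OF \<mu> g] close])
  have "(\<lambda>n. step_integral UNIV g P (F n)) \<longlonglongrightarrow> step_integral UNIV g P F'"
    by (rule step_integral_tendsto[OF P lim])
  from tendstoD[OF this e3]
  have "eventually (\<lambda>n. dist (step_integral UNIV g P (F n)) (step_integral UNIV g P F') < e / 3) sequentially" .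
  then show "eventually (\<lambda>n. dist (LINT x | restrict_space (\<mu> n) cube. g x) (LINT x | restrict_space \<mu>' cube. g x) < e) sequentially"
  proof eventually_elim
    case (elim n)
    then show ?case
      using approx_n[of n] approx unfolding dist_real_def abs_diff_less_iff abs_diff_le_iff by linarith
  qed
qed

section \<open>The function chi\<close>

lemma space_lebesgue_on_cube: "space (lebesgue_on (cube::(real^'n::finite) set)) = cube"
  by (simp add: space_restrict_space)

lemma measure_lebesgue_on_cube: "measure (lebesgue_on (cube::(real^'n::finite) set)) cube = 1"
proof -
  have "measure (lebesgue_on (cube::(real^'n) set)) cube = measure lborel (cube::(real^'n) set)"
    by (subst measure_restrict_space) (auto simp: measure_completion)
  also have "\<dots> = 1"
    unfolding measure_lborel_cbox_eq
    by (simp add: inner_diff_left Basis_vec_def cart_eq_inner_axis prod.UNION_disjoint axis_eq_axis)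
      (auto simp: inner_axis intro!: prod.neutral)
  finally show ?thesis .
qed

lemma abs_integral_lebesgue_on_cube_le:
  fixes f :: "real^'n::finite \<Rightarrow> real"
  assumes "integrable (lebesgue_on cube) f" "\<And>w. w \<in> cube \<Longrightarrow> \<bar>f w\<bar> \<le> c"
  shows "\<bar>LINT w | lebesgue_on cube. f w\<bar> \<le> c"
proof -
  have "\<bar>LINT w | lebesgue_on cube. f w\<bar> \<le> (LINT w | lebesgue_on (cube::(real^'n) set). c)"
    by (rule integral_abs_bound_integral)
      (use assms continuous_imp_integrable[of 0 1 "\<lambda>x::real^'n. c"] in \<open>auto simp: space_lebesgue_on_cube\<close>)
  also have "\<dots> = c"
    by (simp add: space_lebesgue_on_cube measure_lebesgue_on_cube)
  finally show ?thesis .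
qed

lemma marg_eq_face_point: "marg K G u = G (face_point K (\<lambda>i. u$i))"
  by (simp add: marg_def face_point_def)

lemma face_point_in_cube: "u \<in> cube \<Longrightarrow> face_point K (\<lambda>i. u$i) \<in> (cube::(real^'n::finite) set)"
  by (simp add: mem_box_cart)

lemma mix_in_cube: "x \<in> cube \<Longrightarrow> w \<in> cube \<Longrightarrow> mix K' x w \<in> (cube::(real^'n::finite) set)"
  by (simp add: mem_box_cart mix_def)

lemma continuous_on_mix:
  assumes "continuous_on S f" "continuous_on S g"
  shows "continuous_on S (\<lambda>p. mix K' (f p) (g p) :: real^'n::finite)"
  unfolding mix_def
proof (intro continuous_on_vec_lambda)
  fix i show "continuous_on S (\<lambda>p. if i \<in> K' then f p $ i else g p $ i)"
    by (cases "i \<in> K'") (auto intro!: continuous_on_component assms)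
qed

lemma continuous_on_face_point: "continuous_on S (\<lambda>u::real^'n::finite. face_point K (\<lambda>i. u$i))"
  unfolding face_point_def
proof (intro continuous_on_vec_lambda)
  fix i show "continuous_on S (\<lambda>u::real^'n. if i \<in> K then u$i else 1)"
    by (cases "i \<in> K") (auto intro!: continuous_on_component continuous_on_id)
qed

lemma continuous_on_mix_right:
  fixes F :: "real^'n::finite \<Rightarrow> real"
  assumes "continuous_on cube F" "x \<in> cube"
  shows "continuous_on cube (\<lambda>w. F (mix K' x w))"
  by (rule continuous_on_compose2[OF assms(1) continuous_on_mix])
    (use assms(2) mix_in_cube in \<open>auto intro: continuous_on_const continuous_on_id\<close>)

lemma continuous_on_integral_mix:
  fixes F :: "real^'n::finite \<Rightarrow> real"
  assumes F: "continuous_on cube F"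
  shows "continuous_on cube (\<lambda>x. LINT w | lebesgue_on cube. F (mix K' x w))"
  unfolding continuous_on_iff
proof (intro ballI allI impI)
  fix x :: "real^'n" and e :: real assume x: "x \<in> cube" and e: "e > 0"
  have "uniformly_continuous_on cube F"
    using F by (intro compact_uniformly_continuous) auto
  then obtain d where d: "d > 0" "\<And>u v. u \<in> cube \<Longrightarrow> v \<in> cube \<Longrightarrow> dist v u < d \<Longrightarrow> dist (F v) (F u) < e / 2"
    unfolding uniformly_continuous_on_def using e by (metis half_gt_zero)
  show "\<exists>d>0. \<forall>y\<in>cube. dist y x < d \<longrightarrow>
      dist (LINT w | lebesgue_on cube. F (mix K' y w)) (LINT w | lebesgue_on cube. F (mix K' x w)) < e"
  proof (intro exI[of _ d] conjI d(1) ballI impI)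
    fix y :: "real^'n" assume y: "y \<in> cube" and dy: "dist y x < d"
    have int: "integrable (lebesgue_on cube) (\<lambda>w. F (mix K' z w))" if "z \<in> cube" for z
      by (rule continuous_imp_integrable[OF continuous_on_mix_right[OF F that]])
    have "\<bar>(LINT w | lebesgue_on cube. F (mix K' y w)) - (LINT w | lebesgue_on cube. F (mix K' x w))\<bar>
        = \<bar>LINT w | lebesgue_on cube. F (mix K' y w) - F (mix K' x w)\<bar>"
      using int[OF x] int[OF y] by simp
    also have "\<dots> \<le> e / 2"
    proof (rule abs_integral_lebesgue_on_cube_le)
      show "integrable (lebesgue_on cube) (\<lambda>w. F (mix K' y w) - F (mix K' x w))"
        using int[OF x] int[OF y] by simp
      fix w :: "real^'n" assume w: "w \<in> cube"
      have "norm (mix K' y w - mix K' x w) \<le> norm (y - x)"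
        by (rule norm_le_componentwise_cart) (auto simp: mix_def)
      then have "dist (mix K' y w) (mix K' x w) < d"
        using dy by (simp add: dist_norm)
      from d(2)[OF mix_in_cube[OF x w] mix_in_cube[OF y w] this]
      show "\<bar>F (mix K' y w) - F (mix K' x w)\<bar> \<le> e / 2"
        by (simp add: dist_real_def)
    qed
    also have "\<dots> < e"
      using e by simp
    finally show "dist (LINT w | lebesgue_on cube. F (mix K' y w)) (LINT w | lebesgue_on cube. F (mix K' x w)) < e"
      by (simp add: dist_real_def)
  qed
qed

lemma continuous_on_times_marg:
  fixes \<psi> G :: "real^'n::finite \<Rightarrow> real"
  assumes "continuous_on cube \<psi>" "continuous_on cube G"
  shows "continuous_on cube (\<lambda>u. \<psi> u * marg K G u)"
  unfolding marg_eq_face_point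
  by (intro continuous_on_mult assms(1) continuous_on_compose2[OF assms(2) continuous_on_face_point])
    (auto intro: face_point_in_cube)

lemma continuous_on_chi:
  fixes \<psi> G :: "real^'n::finite \<Rightarrow> real"
  assumes "continuous_on cube \<psi>" "continuous_on cube G"
  shows "continuous_on cube (chi K K' \<psi> G)"
  using continuous_on_integral_mix[OF continuous_on_times_marg[OF assms]]
  unfolding chi_def[abs_def] by simp

lemma integrable_chi_integrand_continuous:
  fixes \<psi> G :: "real^'n::finite \<Rightarrow> real"
  assumes "continuous_on cube \<psi>" "continuous_on cube G" "x \<in> cube"
  shows "integrable (lebesgue_on cube) (\<lambda>w. \<psi> (mix K' x w) * marg K G (mix K' x w))"
  using continuous_imp_integrable[OF continuous_on_mix_right[OF continuous_on_times_marg[OF assms(1,2)] assms(3)]]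
  by simp

lemma chi_cong_coordinates:
  assumes "\<And>j. j \<in> K' \<Longrightarrow> x$j = y$j"
  shows "chi K K' \<psi> G x = chi K K' \<psi> G y"
proof -
  have "mix K' x w = mix K' y w" for w
    using assms by (auto simp: mix_def vec_eq_iff)
  then show ?thesis
    by (simp add: chi_def)
qed

lemma chi_linear:
  fixes \<psi> f g :: "real^'n::finite \<Rightarrow> real"
  assumes "integrable (lebesgue_on cube) (\<lambda>w. \<psi> (mix K' x w) * marg K f (mix K' x w))"
    and "integrable (lebesgue_on cube) (\<lambda>w. \<psi> (mix K' x w) * marg K g (mix K' x w))"
  shows "chi K K' \<psi> (\<lambda>u. a * f u + b * g u) x = a * chi K K' \<psi> f x + b * chi K K' \<psi> g x"
proof -
  have "chi K K' \<psi> (\<lambda>u. a * f u + b * g u) x = (LINT w | lebesgue_on cube.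
      a * (\<psi> (mix K' x w) * marg K f (mix K' x w)) + b * (\<psi> (mix K' x w) * marg K g (mix K' x w)))"
    unfolding chi_def by (simp add: marg_def algebra_simps)
  also have "\<dots> = a * chi K K' \<psi> f x + b * chi K K' \<psi> g x"
    unfolding chi_def using assms by simp
  finally show ?thesis .
qed

lemma abs_chi_diff_le:
  fixes \<psi> G1 G2 G3 :: "real^'n::finite \<Rightarrow> real"
  assumes x: "x \<in> cube"
    and i1: "integrable (lebesgue_on cube) (\<lambda>w. \<psi> (mix K' x w) * marg K G1 (mix K' x w))"
    and i2: "integrable (lebesgue_on cube) (\<lambda>w. \<psi> (mix K' x w) * marg K G2 (mix K' x w))"
    and i3: "integrable (lebesgue_on cube) (\<lambda>w. \<psi> (mix K' x w) * marg K G3 (mix K' x w))"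
    and \<psi>: "\<And>u. u \<in> cube \<Longrightarrow> \<bar>\<psi> u\<bar> \<le> B"
    and G: "\<And>u. u \<in> cube \<Longrightarrow> \<bar>G1 u - G2 u - c * G3 u\<bar> \<le> E"
  shows "\<bar>chi K K' \<psi> G1 x - chi K K' \<psi> G2 x - c * chi K K' \<psi> G3 x\<bar> \<le> B * E"
proof -
  let ?I = "\<lambda>G w. \<psi> (mix K' x w) * marg K G (mix K' x w)"
  have "chi K K' \<psi> G1 x - chi K K' \<psi> G2 x - c * chi K K' \<psi> G3 x
      = (LINT w | lebesgue_on cube. ?I G1 w - ?I G2 w - c * ?I G3 w)"
    unfolding chi_def using i1 i2 i3 by simp
  also have "\<bar>\<dots>\<bar> \<le> B * E"
  proof (rule abs_integral_lebesgue_on_cube_le)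
    show "integrable (lebesgue_on cube) (\<lambda>w. ?I G1 w - ?I G2 w - c * ?I G3 w)"
      using i1 i2 i3 by simp
    fix w :: "real^'n" assume w: "w \<in> cube"
    have m: "mix K' x w \<in> cube"
      by (rule mix_in_cube[OF x w])
    have "\<bar>\<psi> (mix K' x w)\<bar> * \<bar>marg K G1 (mix K' x w) - marg K G2 (mix K' x w) - c * marg K G3 (mix K' x w)\<bar> \<le> B * E"
      unfolding marg_eq_face_point using \<psi>[OF m] G[OF face_point_in_cube[OF m]]
      by (intro mult_mono) auto
    then show "\<bar>?I G1 w - ?I G2 w - c * ?I G3 w\<bar> \<le> B * E"
      by (simp add: abs_mult[symmetric] algebra_simps)
  qed
  finally show ?thesis .
qed

lemma abs_chi_le:
  fixes \<psi> G :: "real^'n::finite \<Rightarrow> real"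
  assumes x: "x \<in> cube"
    and i: "integrable (lebesgue_on cube) (\<lambda>w. \<psi> (mix K' x w) * marg K G (mix K' x w))"
    and \<psi>: "\<And>u. u \<in> cube \<Longrightarrow> \<bar>\<psi> u\<bar> \<le> B"
    and G: "\<And>u. u \<in> cube \<Longrightarrow> \<bar>G u\<bar> \<le> E"
  shows "\<bar>chi K K' \<psi> G x\<bar> \<le> B * E"
  unfolding chi_def
proof (rule abs_integral_lebesgue_on_cube_le[OF i])
  fix w :: "real^'n" assume w: "w \<in> cube"
  have m: "mix K' x w \<in> cube"
    by (rule mix_in_cube[OF x w])
  have "\<bar>\<psi> (mix K' x w)\<bar> * \<bar>marg K G (mix K' x w)\<bar> \<le> B * E"
    unfolding marg_eq_face_point using \<psi>[OF m] G[OF face_point_in_cube[OF m]]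
    by (intro mult_mono) auto
  then show "\<bar>\<psi> (mix K' x w) * marg K G (mix K' x w)\<bar> \<le> B * E"
    by (simp add: abs_mult)
qed

lemma borel_measurable_measure_lower_box:
  fixes \<mu> :: "(real^'n::finite) measure"
  assumes \<mu>: "cdf_of F \<mu>"
  shows "(\<lambda>u. measure \<mu> (cbox 0 u)) \<in> borel_measurable borel"
proof -
  interpret prob_space \<mu>
    by (rule cdf_ofD(1)[OF \<mu>])
  define Q where "Q = {p :: (real^'n) \<times> (real^'n). \<forall>i. 0 \<le> snd p $ i \<and> snd p $ i \<le> fst p $ i}"
  have "closed Q"
    unfolding Q_def by (intro closed_Collect_all closed_Collect_conj closed_Collect_le continuous_intros)
  moreover have "sets (borel \<Otimes>\<^sub>M \<mu>) = sets (borel :: ((real^'n) \<times> (real^'n)) measure)"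
    by (simp only: sets_pair_measure_cong[OF refl cdf_ofD(2)[OF \<mu>]] borel_prod)
  ultimately have "Q \<in> sets (borel \<Otimes>\<^sub>M \<mu>)"
    by simp
  then have "(\<lambda>u. emeasure \<mu> (Pair u -` Q)) \<in> borel_measurable borel"
    by (rule measurable_emeasure_Pair)
  moreover have "Pair u -` Q = cbox 0 u" for u
    by (auto simp: Q_def mem_box_cart)
  ultimately have "(\<lambda>u. enn2real (emeasure \<mu> (cbox 0 u))) \<in> borel_measurable borel"
    by simp
  then show ?thesis
    by (simp add: measure_def)
qed

text \<open>A cdf need not be measurable off the cube; this Borel version of the integrand of chi agrees with it
  on the cube and makes Fubini-type measurability arguments available.\<close>
definition chi_kernel :: "'n::finite set \<Rightarrow> 'n set \<Rightarrow> (real^'n \<Rightarrow> real) \<Rightarrow> (real^'n) measure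
    \<Rightarrow> real^'n \<Rightarrow> real^'n \<Rightarrow> real" where
  "chi_kernel K K' \<psi> \<mu> x w = indicator cube (mix K' x w) * \<psi> (mix K' x w) *
     measure \<mu> (cbox 0 (face_point K (\<lambda>i. mix K' x w $ i)))"

lemma borel_measurable_chi_kernel:
  fixes \<mu> :: "(real^'n::finite) measure"
  assumes \<mu>: "cdf_of F \<mu>" and \<psi>: "continuous_on cube \<psi>"
  shows "(\<lambda>p. chi_kernel K K' \<psi> \<mu> (fst p) (snd p)) \<in> borel_measurable borel"
proof -
  have mix: "(\<lambda>p::(real^'n) \<times> (real^'n). mix K' (fst p) (snd p)) \<in> borel_measurable borel"
    by (intro borel_measurable_continuous_onI continuous_on_mix continuous_intros)
  have face: "(\<lambda>p::(real^'n) \<times> (real^'n). face_point K (\<lambda>i. mix K' (fst p) (snd p) $ i)) \<in> borel_measurable borel"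
    by (intro borel_measurable_continuous_onI continuous_on_compose2[OF continuous_on_face_point continuous_on_mix]
        continuous_intros) auto
  have "(\<lambda>u. indicator cube u * \<psi> u) \<in> borel_measurable borel"
    using borel_measurable_continuous_on_indicator[OF _ \<psi>] by simp
  from measurable_compose[OF mix this]
  have "(\<lambda>p. indicator cube (mix K' (fst p) (snd p)) * \<psi> (mix K' (fst p) (snd p))) \<in> borel_measurable borel"
    by (simp add: o_def)
  moreover from measurable_compose[OF face borel_measurable_measure_lower_box[OF \<mu>]]
  have "(\<lambda>p. measure \<mu> (cbox 0 (face_point K (\<lambda>i. mix K' (fst p) (snd p) $ i)))) \<in> borel_measurable borel"
    by (simp add: o_def)
  ultimately show ?thesis
    unfolding chi_kernel_def by (rule borel_measurable_times)
qed

lemma borel_measurable_chi_kernel_right: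
  fixes \<mu> :: "(real^'n::finite) measure"
  assumes "cdf_of F \<mu>" "continuous_on cube \<psi>"
  shows "chi_kernel K K' \<psi> \<mu> x \<in> borel_measurable borel"
proof -
  have "(\<lambda>w::real^'n. (x, w)) \<in> borel_measurable borel"
    by (intro borel_measurable_continuous_onI continuous_intros)
  from measurable_compose[OF this borel_measurable_chi_kernel[OF assms]] show ?thesis
    by (simp add: o_def)
qed

lemma chi_kernel_eq:
  fixes \<mu> :: "(real^'n::finite) measure"
  assumes \<mu>: "cdf_of G \<mu>" and x: "x \<in> cube" and w: "w \<in> cube"
  shows "chi_kernel K K' \<psi> \<mu> x w = \<psi> (mix K' x w) * marg K G (mix K' x w)"
  using mix_in_cube[OF x w] cdf_ofD(5)[OF \<mu> face_point_in_cube[OF mix_in_cube[OF x w]]]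
  by (simp add: chi_kernel_def marg_eq_face_point)

lemma integrable_chi_integrand_cdf:
  fixes \<mu> :: "(real^'n::finite) measure"
  assumes \<mu>: "cdf_of G \<mu>" and \<psi>: "continuous_on cube \<psi>" and x: "x \<in> cube"
  shows "integrable (lebesgue_on cube) (\<lambda>w. \<psi> (mix K' x w) * marg K G (mix K' x w))"
proof -
  interpret finite_measure "lebesgue_on (cube::(real^'n) set)"
    by (rule finite_measure_lebesgue_on) simp
  interpret \<mu>: prob_space \<mu>
    by (rule cdf_ofD(1)[OF \<mu>])
  obtain B where B: "\<And>u. u \<in> cube \<Longrightarrow> \<bar>\<psi> u\<bar> \<le> B"
    using continuous_on_cube_bound[OF \<psi>] by blast
  have "chi_kernel K K' \<psi> \<mu> x \<in> borel_measurable lborel"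
    using borel_measurable_chi_kernel_right[OF \<mu> \<psi>] measurable_cong_sets[OF sets_lborel refl] by simp
  then have "chi_kernel K K' \<psi> \<mu> x \<in> borel_measurable (lebesgue_on cube)"
    by (intro measurable_restrict_space1 measurable_completion)
  moreover have "\<bar>chi_kernel K K' \<psi> \<mu> x w\<bar> \<le> B" if "w \<in> cube" for w
    using B[OF mix_in_cube[OF x that]] mix_in_cube[OF x that]
    by (simp add: chi_kernel_def abs_mult) (metis abs_ge_zero mult_left_le \<mu>.prob_le_1 order_trans)
  ultimately have "integrable (lebesgue_on cube) (chi_kernel K K' \<psi> \<mu> x)"
    by (intro integrable_const_bound[where B=B]) (auto simp: space_lebesgue_on_cube)
  then show ?thesis
    by (rule Bochner_Integration.integrable_cong[THEN iffD1, rotated -1])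
      (auto simp: space_lebesgue_on_cube chi_kernel_eq[OF \<mu> x])
qed

lemma borel_measurable_indicator_chi_cdf:
  fixes \<mu> :: "(real^'n::finite) measure"
  assumes \<mu>: "cdf_of G \<mu>" and \<psi>: "continuous_on cube \<psi>"
  shows "(\<lambda>x. indicator cube x * chi K K' \<psi> G x) \<in> borel_measurable borel"
proof -
  let ?k = "\<lambda>x w. indicator cube w * chi_kernel K K' \<psi> \<mu> x w"
  have "(\<lambda>p::(real^'n) \<times> (real^'n). snd p) \<in> borel_measurable borel"
    by (intro borel_measurable_continuous_onI continuous_intros)
  from measurable_compose[OF this borel_measurable_indicator[of "cube::(real^'n) set" borel]]
  have "(\<lambda>p::(real^'n) \<times> (real^'n). indicator cube (snd p) :: real) \<in> borel_measurable borel"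
    by (simp add: o_def)
  then have "(\<lambda>p. ?k (fst p) (snd p)) \<in> borel_measurable (borel :: ((real^'n) \<times> (real^'n)) measure)"
    using borel_measurable_chi_kernel[OF \<mu> \<psi>] by (rule borel_measurable_times)
  moreover have "sets (borel \<Otimes>\<^sub>M lborel) = sets (borel :: ((real^'n) \<times> (real^'n)) measure)"
    by (simp only: sets_pair_measure_cong[OF refl sets_lborel] borel_prod)
  ultimately have "(\<lambda>p. ?k (fst p) (snd p)) \<in> borel_measurable (borel \<Otimes>\<^sub>M lborel)"
    using measurable_cong_sets[of "borel \<Otimes>\<^sub>M lborel" "borel :: ((real^'n) \<times> (real^'n)) measure"
        "borel :: real measure" borel]
    by simp
  then have meas: "(\<lambda>x. LINT w | lborel. ?k x w) \<in> borel_measurable borel"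
    using lborel.borel_measurable_lebesgue_integral[of ?k borel] by (simp add: split_beta')
  have "chi K K' \<psi> G x = (LINT w | lborel. ?k x w)" if x: "x \<in> cube" for x
  proof -
    have "chi K K' \<psi> G x = (LINT w | lebesgue_on cube. chi_kernel K K' \<psi> \<mu> x w)"
      unfolding chi_def
      by (rule Bochner_Integration.integral_cong) (auto simp: space_lebesgue_on_cube chi_kernel_eq[OF \<mu> x])
    also have "\<dots> = (LINT w | lebesgue. ?k x w)"
      by (subst integral_restrict_space) auto
    also have "\<dots> = (LINT w | lborel. ?k x w)"
    proof (rule integral_completion)
      have "?k x \<in> borel_measurable borel"
        by (intro borel_measurable_times borel_measurable_indicator borel_measurable_chi_kernel_right[OF \<mu> \<psi>]) simp
      then show "?k x \<in> borel_measurable lborel"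
        using measurable_cong_sets[OF sets_lborel refl] by simp
    qed
    finally show ?thesis .
  qed
  then have "(\<lambda>x. indicator cube x * chi K K' \<psi> G x) = (\<lambda>x. indicator cube x * (LINT w | lborel. ?k x w))"
    by (auto simp: indicator_def fun_eq_iff)
  then show ?thesis
    using meas by simp
qed

lemma integrable_indicator_chi_cdf:
  fixes \<mu> :: "(real^'n::finite) measure"
  assumes \<mu>: "cdf_of F \<mu>" and \<nu>: "cdf_of G \<nu>" and \<psi>: "continuous_on cube \<psi>"
  shows "integrable \<mu> (\<lambda>x. indicator cube x * chi K K' \<psi> G x)"
proof -
  obtain B where B: "\<And>u. u \<in> cube \<Longrightarrow> \<bar>\<psi> u\<bar> \<le> B"
    using continuous_on_cube_bound[OF \<psi>] by blast
  show ?thesis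
  proof (rule integrable_indicator_cube_bounded[OF \<mu> borel_measurable_indicator_chi_cdf[OF \<nu> \<psi>]])
    fix x :: "real^'n" assume x: "x \<in> cube"
    show "\<bar>chi K K' \<psi> G x\<bar> \<le> B * 1"
      by (rule abs_chi_le[OF x integrable_chi_integrand_cdf[OF \<nu> \<psi> x] B cdf_of_abs_le_1[OF \<nu>]])
  qed
qed

section \<open>Copulas\<close>

lemma copula_cdf_of: "copula C \<Longrightarrow> cdf_of C (cdf_measure C)"
  by (simp add: copula_def cdf_of_cdf_measure)

lemma copula_measure_slab:
  fixes C :: "real^'n::finite \<Rightarrow> real"
  assumes C: "copula C" and \<mu>: "cdf_of C \<mu>" and c: "0 \<le> c" "c \<le> 1" and c': "0 \<le> c'" "c' \<le> 1"
  shows "measure \<mu> (cbox 0 (face_point {i} (\<lambda>_. c)) - cbox 0 (face_point {i} (\<lambda>_. c'))) \<le> \<bar>c - c'\<bar>"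
proof -
  interpret prob_space \<mu>
    by (rule cdf_ofD(1)[OF \<mu>])
  have box: "cbox 0 u \<in> sets \<mu>" for u :: "real^'n"
    using cdf_ofD(2)[OF \<mu>] by simp
  have margin: "measure \<mu> (cbox 0 (face_point {i} (\<lambda>_. t))) = t" if "0 \<le> t" "t \<le> 1" for t
  proof -
    have "face_point {i} (\<lambda>_. t) \<in> cube"
      using that by (simp add: mem_box_cart)
    moreover have "C (face_point {i} (\<lambda>_. t)) = t"
      using C that by (simp add: copula_def face_point_def)
    ultimately show ?thesis
      using cdf_ofD(5)[OF \<mu>] by simp
  qed
  have mono: "cbox 0 (face_point {i} (\<lambda>_. s)) \<subseteq> cbox 0 (face_point {i} (\<lambda>_. t))" if "s \<le> t" for s t
  proof
    fix x assume x: "x \<in> cbox 0 (face_point {i} (\<lambda>_. s))"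
    show "x \<in> cbox 0 (face_point {i} (\<lambda>_. t))"
      unfolding mem_box_cart
    proof
      fix j
      have "0 \<le> x$j \<and> x$j \<le> face_point {i} (\<lambda>_. s) $ j"
        using x by (simp add: mem_box_cart)
      then show "(0::real^'n)$j \<le> x$j \<and> x$j \<le> face_point {i} (\<lambda>_. t) $ j"
        using that by auto
    qed
  qed
  show ?thesis
  proof (cases "c \<le> c'")
    case True
    then have "cbox 0 (face_point {i} (\<lambda>_. c)) - cbox 0 (face_point {i} (\<lambda>_. c')) = {}"
      using mono[OF True] by blast
    then show ?thesis
      by (metis abs_ge_zero measure_empty)
  next
    case False
    then have "measure \<mu> (cbox 0 (face_point {i} (\<lambda>_. c)) - cbox 0 (face_point {i} (\<lambda>_. c')))
        = measure \<mu> (cbox 0 (face_point {i} (\<lambda>_. c))) - measure \<mu> (cbox 0 (face_point {i} (\<lambda>_. c')))"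
      using mono[of c' c] box by (intro finite_measure_Diff) auto
    then show ?thesis
      using margin c c' False by simp
  qed
qed

text \<open>A point of the box below u lies below v unless some coordinate exceeds v, which happens on a
  slab of a one-dimensional margin; uniform margins bound the mass of each slab.\<close>
lemma copula_le_add_dist_l1:
  fixes C :: "real^'n::finite \<Rightarrow> real"
  assumes C: "copula C" and u: "u \<in> cube" and v: "v \<in> cube"
  shows "C u \<le> C v + (\<Sum>i\<in>UNIV. \<bar>u$i - v$i\<bar>)"
proof -
  define \<mu> where "\<mu> = cdf_measure C"
  have \<mu>: "cdf_of C \<mu>"
    using copula_cdf_of[OF C] by (simp add: \<mu>_def)
  interpret prob_space \<mu>
    by (rule cdf_ofD(1)[OF \<mu>])
  have box: "cbox 0 u \<in> sets \<mu>" for u :: "real^'n"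
    using cdf_ofD(2)[OF \<mu>] by simp
  define S where "S i = cbox 0 (face_point {i} (\<lambda>_. u$i)) - cbox 0 (face_point {i} (\<lambda>_. v$i))" for i
  have uv01: "0 \<le> u$i" "u$i \<le> 1" "0 \<le> v$i" "v$i \<le> 1" for i
    using u v by (auto simp: mem_box_cart)
  have "cbox 0 u \<subseteq> cbox 0 v \<union> (\<Union>i. S i)"
  proof
    fix x assume x: "x \<in> cbox 0 u"
    show "x \<in> cbox 0 v \<union> (\<Union>i. S i)"
    proof (cases "\<exists>i. v$i < x$i")
      case True
      then obtain i where "v$i < x$i"
        by blast
      then have "x \<in> S i"
        using x uv01 by (auto simp: S_def mem_box_cart intro: order_trans)
      then show ?thesis
        by blast
    qed (use x in \<open>auto simp: mem_box_cart not_less\<close>)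
  qed
  then have "measure \<mu> (cbox 0 u) \<le> measure \<mu> (cbox 0 v \<union> (\<Union>i. S i))"
    by (intro finite_measure_mono) (auto intro!: box simp: S_def)
  also have "\<dots> \<le> measure \<mu> (cbox 0 v) + measure \<mu> (\<Union>i. S i)"
    by (rule measure_Un_le) (auto intro!: box simp: S_def)
  also have "measure \<mu> (\<Union>i. S i) \<le> (\<Sum>i\<in>UNIV. measure \<mu> (S i))"
    by (rule finite_measure_subadditive_finite) (auto intro!: box simp: S_def)
  also have "\<dots> \<le> (\<Sum>i\<in>UNIV. \<bar>u$i - v$i\<bar>)"
    unfolding S_def by (intro sum_mono copula_measure_slab[OF C \<mu>] uv01)
  finally show ?thesis
    using cdf_ofD(5)[OF \<mu> u] cdf_ofD(5)[OF \<mu> v] by simp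
qed

lemma continuous_on_copula:
  fixes C :: "real^'n::finite \<Rightarrow> real"
  assumes C: "copula C"
  shows "continuous_on cube C"
  unfolding continuous_on_iff
proof (intro ballI allI impI)
  fix x :: "real^'n" and e :: real assume x: "x \<in> cube" and e: "e > 0"
  define d where "d = e / (real CARD('n) + 1)"
  have d: "d > 0"
    using e by (simp add: d_def add_pos_nonneg)
  show "\<exists>d>0. \<forall>y\<in>cube. dist y x < d \<longrightarrow> dist (C y) (C x) < e"
  proof (intro exI[of _ d] conjI d ballI impI)
    fix y :: "real^'n" assume y: "y \<in> cube" and dy: "dist y x < d"
    have "(\<Sum>i\<in>UNIV. \<bar>y$i - x$i\<bar>) \<le> (\<Sum>i\<in>(UNIV::'n set). dist y x)"
      by (rule sum_mono) (metis component_le_norm_cart dist_norm real_norm_def vector_minus_component)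
    also have "\<dots> \<le> real CARD('n) * d"
      using dy by (simp add: mult_left_mono)
    also have "\<dots> < e"
      using e by (simp add: d_def field_simps)
    finally have lt: "(\<Sum>i\<in>UNIV. \<bar>y$i - x$i\<bar>) < e" .
    have "C y \<le> C x + (\<Sum>i\<in>UNIV. \<bar>y$i - x$i\<bar>)" "C x \<le> C y + (\<Sum>i\<in>UNIV. \<bar>x$i - y$i\<bar>)"
      using copula_le_add_dist_l1[OF C y x] copula_le_add_dist_l1[OF C x y] .
    moreover have "(\<Sum>i\<in>UNIV. \<bar>x$i - y$i\<bar>) = (\<Sum>i\<in>UNIV. \<bar>y$i - x$i\<bar>)"
      by (simp add: abs_minus_commute)
    ultimately show "dist (C y) (C x) < e"
      using lt by (simp add: dist_real_def abs_if)
  qed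
qed

section \<open>Differentiability of Psi\<close>

lemma grid_variation_le_vitali_var:
  assumes "J \<noteq> {}" "vitali_var J g < \<infinity>" "grid J P"
  shows "grid_variation J g P \<le> real_of_ereal (vitali_var J g)"
proof -
  have le: "ereal (grid_variation J g P) \<le> vitali_var J g"
    unfolding vitali_var_def grid_variation_def cell_vol_def by (rule SUP_upper) (use assms(3) in simp)
  then obtain r where "vitali_var J g = ereal r"
    using assms(2) by (cases "vitali_var J g") auto
  then show ?thesis
    using le by simp
qed

lemma grid_variation_empty: "grid_variation {} g P = \<bar>g (\<chi> i. 1)\<bar>"
  by (simp add: grid_variation_def cell_vol_def cells_def vol_def)

lemma hk_bv_grid_variation_bounded:
  assumes "hk_bv S g"
  obtains V where "V \<ge> 0" "\<And>J P. J \<subseteq> S \<Longrightarrow> grid J P \<Longrightarrow> grid_variation J g P \<le> V"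
proof -
  define W where "W J = (if J = {} then \<bar>g (\<chi> i. 1)\<bar> else max 0 (real_of_ereal (vitali_var J g)))" for J
  have W: "grid_variation J g P \<le> W J" if "J \<subseteq> S" "grid J P" for J P
  proof (cases "J = {}")
    case False
    then have "vitali_var J g < \<infinity>"
      using assms that(1) by (auto simp: hk_bv_def)
    from grid_variation_le_vitali_var[OF False this that(2)] show ?thesis
      using False by (simp add: W_def)
  qed (simp add: W_def grid_variation_empty)
  have W0: "W J \<ge> 0" for J
    by (simp add: W_def)
  show ?thesis
  proof (rule that[of "\<Sum>J\<in>Pow S. W J"])
    show "(\<Sum>J\<in>Pow S. W J) \<ge> 0"
      by (simp add: W0 sum_nonneg)
    fix J P assume "J \<subseteq> S" "grid J P"
    then have "grid_variation J g P \<le> W J"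
      by (rule W)
    also have "W J \<le> (\<Sum>J\<in>Pow S. W J)"
      using \<open>J \<subseteq> S\<close> W0 by (intro member_le_sum) auto
    finally show "grid_variation J g P \<le> (\<Sum>J\<in>Pow S. W J)" .
  qed
qed

definition alternating_rs_sum :: "'n::finite set \<Rightarrow> (real^'n \<Rightarrow> real) \<Rightarrow> (real^'n \<Rightarrow> real) \<Rightarrow> ('n \<Rightarrow> real set) \<Rightarrow> real" where
  "alternating_rs_sum S f g P = (\<Sum>J\<in>Pow S. (-1) ^ card J * rs_sum J f g P (face_point J))"

lemma step_integral_add_diff:
  "step_integral S g P (\<lambda>u. F u + c * H u) - step_integral S g P F = c * alternating_rs_sum S H g P"
  unfolding step_integral_def alternating_rs_sum_def rs_sum_cell_vol
  by (simp add: sum_subtractf[symmetric] sum_distrib_left distrib_left distrib_right algebra_simps)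

lemma alternating_rs_sum_uniform_grid_tendsto:
  assumes "\<And>J. J \<subseteq> S \<Longrightarrow> rs_has J f g (I J)"
  shows "(\<lambda>n. alternating_rs_sum S f g (\<lambda>_. uniform_grid n)) \<longlonglongrightarrow> (\<Sum>J\<in>Pow S. (-1) ^ card J * I J)"
  unfolding alternating_rs_sum_def by (intro tendsto_sum tendsto_mult_left rs_has_uniform_grid_tendsto assms) auto

lemma abs_alternating_rs_sum_diff_le:
  fixes g :: "real^'n::finite \<Rightarrow> real"
  assumes P: "grid S P" and V: "\<And>J. J \<subseteq> S \<Longrightarrow> grid_variation J g P \<le> V"
    and close: "\<And>u. u \<in> cube \<Longrightarrow> \<bar>H u - h u\<bar> \<le> \<epsilon>"
  shows "\<bar>alternating_rs_sum S H g P - alternating_rs_sum S h g P\<bar> \<le> \<epsilon> * (2 ^ card S * V)"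
proof -
  have "\<bar>alternating_rs_sum S H g P - alternating_rs_sum S h g P\<bar>
      = \<bar>\<Sum>J\<in>Pow S. (-1) ^ card J * rs_sum J (\<lambda>u. 1 * H u + (-1) * h u) g P (face_point J)\<bar>"
    unfolding alternating_rs_sum_def rs_sum_linear by (simp add: sum_subtractf[symmetric] algebra_simps)
  also have "\<dots> \<le> (\<Sum>J\<in>Pow S. \<epsilon> * V)"
  proof (rule order_trans[OF sum_abs sum_mono])
    fix J assume J: "J \<in> Pow S"
    have "\<bar>rs_sum J (\<lambda>u. 1 * H u + (-1) * h u) g P (face_point J)\<bar> \<le> \<epsilon> * V"
      using close J by (intro rs_sum_bound grid_Pow[OF P] rs_tags_face_point V) auto
    then show "\<bar>(-1) ^ card J * rs_sum J (\<lambda>u. 1 * H u + (-1) * h u) g P (face_point J)\<bar> \<le> \<epsilon> * V"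
      by (simp add: abs_mult)
  qed
  also have "\<dots> = \<epsilon> * (2 ^ card S * V)"
    by (simp add: card_Pow)
  finally show ?thesis .
qed

lemma integral_restrict_cube_linear:
  fixes F G1 G2 :: "real^'n::finite \<Rightarrow> real"
  assumes \<mu>: "cdf_of C \<mu>"
    and "integrable \<mu> (\<lambda>x. indicator cube x * G1 x)" "integrable \<mu> (\<lambda>x. indicator cube x * G2 x)"
    and F: "\<And>x. x \<in> cube \<Longrightarrow> F x = a * G1 x + b * G2 x"
  shows "(LINT x | restrict_space \<mu> cube. F x)
      = a * (LINT x | restrict_space \<mu> cube. G1 x) + b * (LINT x | restrict_space \<mu> cube. G2 x)"
proof -
  have "(LINT x | \<mu>. indicator cube x * F x) = (LINT x | \<mu>. a * (indicator cube x * G1 x) + b * (indicator cube x * G2 x))"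
    by (rule Bochner_Integration.integral_cong[OF refl]) (auto simp: F indicator_def algebra_simps)
  also have "\<dots> = a * (LINT x | \<mu>. indicator cube x * G1 x) + b * (LINT x | \<mu>. indicator cube x * G2 x)"
    using assms(2,3) by simp
  finally show ?thesis
    by (simp add: integral_restrict_cube[OF \<mu>])
qed

lemma Dpsi_linear:
  fixes \<psi> C f g :: "real^'n::finite \<Rightarrow> real"
  assumes \<psi>: "continuous_on cube \<psi>" and C: "C \<in> cdfs" and bv: "hk_bv K' (chi K K' \<psi> C)"
    and f: "continuous_on cube f" and g: "continuous_on cube g"
  shows "Dpsi K K' \<psi> C (\<lambda>u. a * f u + b * g u) = a * Dpsi K K' \<psi> C f + b * Dpsi K K' \<psi> C g"
proof -
  define \<mu> where "\<mu> = cdf_measure C"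
  have \<mu>: "cdf_of C \<mu>"
    unfolding \<mu>_def by (rule cdf_of_cdf_measure[OF C])
  obtain V where V: "\<And>J P. J \<subseteq> K' \<Longrightarrow> grid J P \<Longrightarrow> grid_variation J (chi K K' \<psi> C) P \<le> V"
    using hk_bv_grid_variation_bounded[OF bv] by blast
  have rs: "rs_has J h (chi K K' \<psi> C) (rs_int J h (chi K K' \<psi> C))" if "J \<subseteq> K'" "continuous_on cube h" for J h
    using rs_has_rs_int[OF that(2) V[OF that(1)]] .
  have first: "(LINT x | restrict_space \<mu> cube. chi K K' \<psi> (\<lambda>u. a * f u + b * g u) x)
      = a * (LINT x | restrict_space \<mu> cube. chi K K' \<psi> f x) + b * (LINT x | restrict_space \<mu> cube. chi K K' \<psi> g x)"
    by (rule integral_restrict_cube_linear[OF \<mu>]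
        integrable_indicator_cube_continuous[OF \<mu> continuous_on_chi[OF \<psi> f]]
        integrable_indicator_cube_continuous[OF \<mu> continuous_on_chi[OF \<psi> g]]
        chi_linear[OF integrable_chi_integrand_continuous[OF \<psi> f] integrable_chi_integrand_continuous[OF \<psi> g]])+
  have "rs_int J (\<lambda>u. a * f u + b * g u) (chi K K' \<psi> C)
      = a * rs_int J f (chi K K' \<psi> C) + b * rs_int J g (chi K K' \<psi> C)" if "J \<in> Pow K'" for J
    using that by (intro rs_int_eqI rs_has_linear rs f g) auto
  then have second: "(\<Sum>J\<in>Pow K'. (-1) ^ card J * rs_int J (\<lambda>u. a * f u + b * g u) (chi K K' \<psi> C))
      = a * (\<Sum>J\<in>Pow K'. (-1) ^ card J * rs_int J f (chi K K' \<psi> C))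
        + b * (\<Sum>J\<in>Pow K'. (-1) ^ card J * rs_int J g (chi K K' \<psi> C))"
    by (simp add: sum_distrib_left sum.distrib[symmetric] algebra_simps)
  show ?thesis
    unfolding Dpsi_def \<mu>_def[symmetric] first second by (simp add: algebra_simps)
qed

lemma abs_Dpsi_le:
  fixes \<psi> C :: "real^'n::finite \<Rightarrow> real"
  assumes \<psi>: "continuous_on cube \<psi>" and C: "C \<in> cdfs" and bv: "hk_bv K' (chi K K' \<psi> C)"
  obtains B where "\<And>f. continuous_on cube f \<Longrightarrow> \<bar>Dpsi K K' \<psi> C f\<bar> \<le> B * (SUP u\<in>cube. \<bar>f u\<bar>)"
proof -
  define \<mu> where "\<mu> = cdf_measure C"
  have \<mu>: "cdf_of C \<mu>"
    unfolding \<mu>_def by (rule cdf_of_cdf_measure[OF C])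
  obtain V where V: "\<And>J P. J \<subseteq> K' \<Longrightarrow> grid J P \<Longrightarrow> grid_variation J (chi K K' \<psi> C) P \<le> V"
    using hk_bv_grid_variation_bounded[OF bv] by blast
  obtain B\<psi> where B\<psi>: "\<And>u. u \<in> cube \<Longrightarrow> \<bar>\<psi> u\<bar> \<le> B\<psi>"
    using continuous_on_cube_bound[OF \<psi>] by blast
  show ?thesis
  proof (rule that)
    fix f :: "real^'n \<Rightarrow> real" assume f: "continuous_on cube f"
    define s where "s = (SUP u\<in>cube. \<bar>f u\<bar>)"
    obtain Bf where "\<And>u. u \<in> cube \<Longrightarrow> \<bar>f u\<bar> \<le> Bf"
      using continuous_on_cube_bound[OF f] by blast
    then have "bdd_above ((\<lambda>u. \<bar>f u\<bar>) ` cube)"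
      unfolding bdd_above_def by blast
    then have fs: "\<bar>f u\<bar> \<le> s" if "u \<in> cube" for u
      unfolding s_def using that by (rule cSUP_upper[rotated])
    have first: "\<bar>LINT x | restrict_space \<mu> cube. chi K K' \<psi> f x\<bar> \<le> B\<psi> * s"
      by (rule abs_integral_restrict_cube_le[OF \<mu> integrable_indicator_cube_continuous[OF \<mu> continuous_on_chi[OF \<psi> f]]])
        (rule abs_chi_le[OF _ integrable_chi_integrand_continuous[OF \<psi> f] B\<psi> fs])
    have "\<bar>\<Sum>J\<in>Pow K'. (-1) ^ card J * rs_int J f (chi K K' \<psi> C)\<bar> \<le> (\<Sum>J\<in>Pow K'. s * V)"
    proof (rule order_trans[OF sum_abs sum_mono])
      fix J assume "J \<in> Pow K'"
      then have "\<bar>rs_int J f (chi K K' \<psi> C)\<bar> \<le> s * V"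
        using rs_has_bound[OF rs_has_rs_int[OF f V] fs V] by auto
      then show "\<bar>(-1) ^ card J * rs_int J f (chi K K' \<psi> C)\<bar> \<le> s * V"
        by (simp add: abs_mult)
    qed
    then have second: "\<bar>\<Sum>J\<in>Pow K'. (-1) ^ card J * rs_int J f (chi K K' \<psi> C)\<bar> \<le> 2 ^ card K' * V * s"
      by (simp add: card_Pow mult_ac)
    have "\<bar>Dpsi K K' \<psi> C f\<bar> \<le> \<bar>LINT x | restrict_space \<mu> cube. chi K K' \<psi> f x\<bar>
        + \<bar>\<Sum>J\<in>Pow K'. (-1) ^ card J * rs_int J f (chi K K' \<psi> C)\<bar>"
      unfolding Dpsi_def \<mu>_def[symmetric] by (rule abs_triangle_ineq)
    also have "\<dots> \<le> B\<psi> * s + 2 ^ card K' * V * s"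
      using first second by (rule add_mono)
    finally show "\<bar>Dpsi K K' \<psi> C f\<bar> \<le> (B\<psi> + 2 ^ card K' * V) * (SUP u\<in>cube. \<bar>f u\<bar>)"
      by (simp add: s_def algebra_simps)
  qed
qed

lemma tendsto_of_eventually_abs_le_mult:
  fixes X :: "nat \<Rightarrow> real"
  assumes c: "c \<ge> 0" and bound: "\<And>\<epsilon>. \<epsilon> > 0 \<Longrightarrow> eventually (\<lambda>n. \<bar>X n - L\<bar> \<le> c * \<epsilon>) sequentially"
  shows "X \<longlonglongrightarrow> L"
proof (rule tendstoI)
  fix e :: real assume e: "e > 0"
  define \<epsilon> where "\<epsilon> = e / (c + 1)"
  have \<epsilon>: "\<epsilon> > 0" "c * \<epsilon> < e"
    using e c by (simp_all add: \<epsilon>_def field_simps)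
  show "eventually (\<lambda>n. dist (X n) L < e) sequentially"
    using bound[OF \<epsilon>(1)] by eventually_elim (use \<epsilon>(2) in \<open>simp add: dist_real_def\<close>)
qed

lemma eventually_uniform_limit_close:
  fixes hs :: "nat \<Rightarrow> 'a::topological_space \<Rightarrow> real"
  assumes "uniform_limit S hs h sequentially" "\<epsilon> > 0"
  shows "eventually (\<lambda>n. \<forall>u\<in>S. \<bar>hs n u - h u\<bar> \<le> \<epsilon>) sequentially"
  using uniform_limitD[OF assms] by eventually_elim (auto simp: dist_real_def less_imp_le)

lemma perturbation_tendsto:
  fixes t :: "nat \<Rightarrow> real"
  assumes "t \<longlonglongrightarrow> 0" "uniform_limit S hs h sequentially" "u \<in> S"
  shows "(\<lambda>n. C u + t n * hs n u) \<longlonglongrightarrow> C u"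
  using tendsto_add[OF tendsto_const tendsto_mult[OF assms(1) tendsto_uniform_limitI[OF assms(2,3)]]] by simp

lemma abs_integral_chi_linearization_le:
  fixes \<psi> C H h :: "real^'n::finite \<Rightarrow> real"
  assumes \<nu>: "cdf_of (\<lambda>u. C u + t * H u) \<nu>" and \<psi>: "continuous_on cube \<psi>" "\<And>u. u \<in> cube \<Longrightarrow> \<bar>\<psi> u\<bar> \<le> B"
    and C: "continuous_on cube C" and h: "continuous_on cube h"
    and close: "\<And>u. u \<in> cube \<Longrightarrow> \<bar>H u - h u\<bar> \<le> \<epsilon>"
  shows "\<bar>(LINT x | restrict_space \<nu> cube. chi K K' \<psi> (\<lambda>u. C u + t * H u) x)
           - (LINT x | restrict_space \<nu> cube. chi K K' \<psi> C x)
           - t * (LINT x | restrict_space \<nu> cube. chi K K' \<psi> h x)\<bar> \<le> B * (\<bar>t\<bar> * \<epsilon>)"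
proof -
  let ?Ct = "\<lambda>u. C u + t * H u"
  let ?d = "\<lambda>x. chi K K' \<psi> ?Ct x - chi K K' \<psi> C x - t * chi K K' \<psi> h x"
  have i1: "integrable \<nu> (\<lambda>x. indicator cube x * chi K K' \<psi> ?Ct x)"
    by (rule integrable_indicator_chi_cdf[OF \<nu> \<nu> \<psi>(1)])
  have i2: "integrable \<nu> (\<lambda>x. indicator cube x * chi K K' \<psi> C x)"
    by (rule integrable_indicator_cube_continuous[OF \<nu> continuous_on_chi[OF \<psi>(1) C]])
  have i3: "integrable \<nu> (\<lambda>x. indicator cube x * chi K K' \<psi> h x)"
    by (rule integrable_indicator_cube_continuous[OF \<nu> continuous_on_chi[OF \<psi>(1) h]])
  have "(LINT x | restrict_space \<nu> cube. chi K K' \<psi> ?Ct x) - (LINT x | restrict_space \<nu> cube. chi K K' \<psi> C x)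
      - t * (LINT x | restrict_space \<nu> cube. chi K K' \<psi> h x) = (LINT x | restrict_space \<nu> cube. ?d x)"
    using i1 i2 i3 by (simp add: integral_restrict_cube[OF \<nu>] algebra_simps)
  also have "\<bar>\<dots>\<bar> \<le> B * (\<bar>t\<bar> * \<epsilon>)"
  proof (rule abs_integral_restrict_cube_le[OF \<nu>])
    show "integrable \<nu> (\<lambda>x. indicator cube x * ?d x)"
      using i1 i2 i3 by (simp add: algebra_simps)
    fix x :: "real^'n" assume x: "x \<in> cube"
    show "\<bar>?d x\<bar> \<le> B * (\<bar>t\<bar> * \<epsilon>)"
    proof (rule abs_chi_diff_le[OF x integrable_chi_integrand_cdf[OF \<nu> \<psi>(1) x]
          integrable_chi_integrand_continuous[OF \<psi>(1) C x] integrable_chi_integrand_continuous[OF \<psi>(1) h x] \<psi>(2)])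
      fix u :: "real^'n" assume "u \<in> cube"
      then show "\<bar>?Ct u - C u - t * h u\<bar> \<le> \<bar>t\<bar> * \<epsilon>"
        using close[of u] by (simp add: abs_mult mult_left_mono flip: right_diff_distrib)
    qed
  qed
  finally show ?thesis .
qed

text \<open>The first term of the derivative: chi is linear in the cdf, and the laws converge.\<close>
lemma chi_quotient_integral_tendsto:
  fixes \<psi> C h :: "real^'n::finite \<Rightarrow> real" and hs :: "nat \<Rightarrow> real^'n \<Rightarrow> real"
  assumes \<psi>: "continuous_on cube \<psi>" and \<mu>: "cdf_of C \<mu>" and C: "continuous_on cube C"
    and \<mu>n: "\<And>n. cdf_of (\<lambda>u. C u + t n * hs n u) (\<mu>n n)"
    and t: "\<And>n. t n \<noteq> 0" "t \<longlonglongrightarrow> 0" and h: "continuous_on cube h" and hs: "uniform_limit cube hs h sequentially"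
  shows "(\<lambda>n. ((LINT x | restrict_space (\<mu>n n) cube. chi K K' \<psi> (\<lambda>u. C u + t n * hs n u) x)
              - (LINT x | restrict_space (\<mu>n n) cube. chi K K' \<psi> C x)) / t n)
         \<longlonglongrightarrow> (LINT x | restrict_space \<mu> cube. chi K K' \<psi> h x)"
    (is "?A \<longlonglongrightarrow> _")
proof -
  define Y where "Y n = (LINT x | restrict_space (\<mu>n n) cube. chi K K' \<psi> h x)" for n
  obtain B where B: "B \<ge> 0" "\<And>u. u \<in> cube \<Longrightarrow> \<bar>\<psi> u\<bar> \<le> B"
    using continuous_on_cube_bound[OF \<psi>] by blast
  have "(\<lambda>n. ?A n - Y n) \<longlonglongrightarrow> 0"
  proof (rule tendsto_of_eventually_abs_le_mult[OF B(1)])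
    fix \<epsilon> :: real assume "\<epsilon> > 0"
    show "eventually (\<lambda>n. \<bar>?A n - Y n - 0\<bar> \<le> B * \<epsilon>) sequentially"
      using eventually_uniform_limit_close[OF hs \<open>\<epsilon> > 0\<close>]
    proof eventually_elim
      case (elim n)
      have "?A n - Y n = ((LINT x | restrict_space (\<mu>n n) cube. chi K K' \<psi> (\<lambda>u. C u + t n * hs n u) x)
          - (LINT x | restrict_space (\<mu>n n) cube. chi K K' \<psi> C x) - t n * Y n) / t n"
        using t(1)[of n] by (simp add: field_simps)
      also have "\<bar>\<dots>\<bar> \<le> B * (\<bar>t n\<bar> * \<epsilon>) / \<bar>t n\<bar>"
        unfolding abs_divide Y_def using elim
        by (intro divide_right_mono abs_integral_chi_linearization_le[OF \<mu>n \<psi> B(2) C h]) auto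
      finally show ?case
        using t(1)[of n] by simp
    qed
  qed
  moreover have "Y \<longlonglongrightarrow> (LINT x | restrict_space \<mu> cube. chi K K' \<psi> h x)"
    unfolding Y_def using perturbation_tendsto[OF t(2) hs]
    by (intro integral_tendsto_of_cdf_tendsto[OF \<mu>n \<mu> _ continuous_on_chi[OF \<psi> h]])
  ultimately show ?thesis
    using tendsto_add by fastforce
qed

text \<open>The second term: after replacing chi C by a grid step function, the difference of the integrals
  against the two laws is t times an alternating sum of Riemann--Stieltjes sums of H against chi C.\<close>
lemma abs_stieltjes_quotient_le:
  fixes g C H h :: "real^'n::finite \<Rightarrow> real"
  assumes \<nu>: "cdf_of (\<lambda>u. C u + t * H u) \<nu>" and \<mu>: "cdf_of C \<mu>" and t: "t \<noteq> 0"
    and g: "continuous_on cube g" and coordinatewise: "\<And>x y. (\<And>j. j \<in> S \<Longrightarrow> x$j = y$j) \<Longrightarrow> g x = g y"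
    and close: "\<And>u. u \<in> cube \<Longrightarrow> \<bar>H u - h u\<bar> \<le> \<epsilon>"
    and I: "\<And>J. J \<subseteq> S \<Longrightarrow> rs_has J h g (I J)"
    and V: "\<And>J P. J \<subseteq> S \<Longrightarrow> grid J P \<Longrightarrow> grid_variation J g P \<le> V"
  shows "\<bar>((LINT x | restrict_space \<nu> cube. g x) - (LINT x | restrict_space \<mu> cube. g x)) / t
          - (\<Sum>J\<in>Pow S. (-1) ^ card J * I J)\<bar> \<le> \<epsilon> * (2 ^ card S * V)"
proof (rule field_le_epsilon)
  fix e :: real assume e: "e > 0"
  define X where "X = (LINT x | restrict_space \<nu> cube. g x)"
  define Y where "Y = (LINT x | restrict_space \<mu> cube. g x)"
  define L where "L = (\<Sum>J\<in>Pow S. (-1) ^ card J * I J)"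
  have e': "e * \<bar>t\<bar> / 4 > 0" "e / 2 > 0"
    using e t by simp_all
  have "eventually (\<lambda>n. (\<forall>x\<in>cube. \<bar>g x - g (face_point S (\<lambda>i. grid_ceil (uniform_grid n) (x$i)))\<bar> \<le> e * \<bar>t\<bar> / 4)
      \<and> dist (alternating_rs_sum S h g (\<lambda>_. uniform_grid n)) L < e / 2) sequentially"
    using eventually_uniform_grid_step_close[OF g coordinatewise e'(1)]
      tendstoD[OF alternating_rs_sum_uniform_grid_tendsto[OF I] e'(2)]
    unfolding L_def by (rule eventually_conj)
  then obtain n where n: "\<forall>x\<in>cube. \<bar>g x - g (face_point S (\<lambda>i. grid_ceil (uniform_grid n) (x$i)))\<bar> \<le> e * \<bar>t\<bar> / 4"
    "\<bar>alternating_rs_sum S h g (\<lambda>_. uniform_grid n) - L\<bar> < e / 2"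
    unfolding eventually_sequentially dist_real_def by blast
  define P where "P = (\<lambda>_::'n. uniform_grid n)"
  have P: "grid S P"
    unfolding P_def by (rule grid_uniform_grid)
  have step_close: "\<And>x. x \<in> cube \<Longrightarrow> \<bar>g x - g (face_point S (\<lambda>i. grid_ceil (P i) (x$i)))\<bar> \<le> e * \<bar>t\<bar> / 4"
    using n(1) by (simp add: P_def)
  have "\<bar>X - step_integral S g P (\<lambda>u. C u + t * H u)\<bar> \<le> e * \<bar>t\<bar> / 4"
    unfolding X_def by (rule integral_approx_step_integral[OF \<nu> P integrable_indicator_cube_continuous[OF \<nu> g] step_close])
  moreover have "\<bar>Y - step_integral S g P C\<bar> \<le> e * \<bar>t\<bar> / 4"
    unfolding Y_def by (rule integral_approx_step_integral[OF \<mu> P integrable_indicator_cube_continuous[OF \<mu> g] step_close])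
  ultimately have "\<bar>X - Y - t * alternating_rs_sum S H g P\<bar> \<le> e * \<bar>t\<bar> / 2"
    using step_integral_add_diff[of S g P C t H] unfolding abs_le_iff by linarith
  then have "\<bar>(X - Y) / t - alternating_rs_sum S H g P\<bar> \<le> e / 2"
    using t by (simp add: field_simps abs_divide)
  moreover have "\<bar>alternating_rs_sum S H g P - alternating_rs_sum S h g P\<bar> \<le> \<epsilon> * (2 ^ card S * V)"
  proof (rule abs_alternating_rs_sum_diff_le[OF P _ close])
    fix J assume "J \<subseteq> S"
    then show "grid_variation J g P \<le> V"
      using V grid_Pow[OF P] by blast
  qed
  ultimately show "\<bar>(X - Y) / t - L\<bar> \<le> \<epsilon> * (2 ^ card S * V) + e"
    using n(2) unfolding P_def abs_le_iff abs_less_iff by linarith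
qed

lemma stieltjes_quotient_tendsto:
  fixes \<psi> C h :: "real^'n::finite \<Rightarrow> real" and hs :: "nat \<Rightarrow> real^'n \<Rightarrow> real"
  assumes \<psi>: "continuous_on cube \<psi>" and \<mu>: "cdf_of C \<mu>" and C: "continuous_on cube C"
    and bv: "hk_bv K' (chi K K' \<psi> C)" and \<mu>n: "\<And>n. cdf_of (\<lambda>u. C u + t n * hs n u) (\<mu>n n)"
    and t: "\<And>n. t n \<noteq> 0" and h: "continuous_on cube h" and hs: "uniform_limit cube hs h sequentially"
  shows "(\<lambda>n. ((LINT x | restrict_space (\<mu>n n) cube. chi K K' \<psi> C x)
              - (LINT x | restrict_space \<mu> cube. chi K K' \<psi> C x)) / t n)
         \<longlonglongrightarrow> (\<Sum>J\<in>Pow K'. (-1) ^ card J * rs_int J h (chi K K' \<psi> C))"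
proof -
  obtain V where V: "V \<ge> 0" "\<And>J P. J \<subseteq> K' \<Longrightarrow> grid J P \<Longrightarrow> grid_variation J (chi K K' \<psi> C) P \<le> V"
    using hk_bv_grid_variation_bounded[OF bv] by blast
  have rs: "rs_has J h (chi K K' \<psi> C) (rs_int J h (chi K K' \<psi> C))" if "J \<subseteq> K'" for J
    by (rule rs_has_rs_int[OF h V(2)[OF that]])
  show ?thesis
  proof (rule tendsto_of_eventually_abs_le_mult)
    show "2 ^ card K' * V \<ge> 0"
      using V(1) by simp
    fix \<epsilon> :: real assume "\<epsilon> > 0"
    show "eventually (\<lambda>n. \<bar>((LINT x | restrict_space (\<mu>n n) cube. chi K K' \<psi> C x)
        - (LINT x | restrict_space \<mu> cube. chi K K' \<psi> C x)) / t n
        - (\<Sum>J\<in>Pow K'. (-1) ^ card J * rs_int J h (chi K K' \<psi> C))\<bar> \<le> 2 ^ card K' * V * \<epsilon>) sequentially"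
      using eventually_uniform_limit_close[OF hs \<open>\<epsilon> > 0\<close>]
    proof eventually_elim
      case (elim n)
      have "\<bar>((LINT x | restrict_space (\<mu>n n) cube. chi K K' \<psi> C x)
          - (LINT x | restrict_space \<mu> cube. chi K K' \<psi> C x)) / t n
          - (\<Sum>J\<in>Pow K'. (-1) ^ card J * rs_int J h (chi K K' \<psi> C))\<bar> \<le> \<epsilon> * (2 ^ card K' * V)"
        by (rule abs_stieltjes_quotient_le[where S=K', OF \<mu>n \<mu> t continuous_on_chi[OF \<psi> C]
              chi_cong_coordinates _ rs V(2)]) (use elim in auto)
      then show ?case
        by (simp add: mult_ac)
    qed
  qed
qed

lemma Psi_difference_quotient_tendsto:
  fixes \<psi> C h :: "real^'n::finite \<Rightarrow> real" and hs :: "nat \<Rightarrow> real^'n \<Rightarrow> real"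
  assumes \<psi>: "continuous_on cube \<psi>" and C: "C \<in> cdfs" "continuous_on cube C" and bv: "hk_bv K' (chi K K' \<psi> C)"
    and t: "\<And>n. t n \<noteq> 0" "t \<longlonglongrightarrow> 0" and h: "continuous_on cube h" and hs: "uniform_limit cube hs h sequentially"
    and dom: "\<And>n. (\<lambda>u. C u + t n * hs n u) \<in> cdfs"
  shows "(\<lambda>n. (Psi K K' \<psi> (\<lambda>u. C u + t n * hs n u) - Psi K K' \<psi> C) / t n) \<longlonglongrightarrow> Dpsi K K' \<psi> C h"
proof -
  define \<mu> where "\<mu> = cdf_measure C"
  define \<mu>n where "\<mu>n n = cdf_measure (\<lambda>u. C u + t n * hs n u)" for n
  have \<mu>: "cdf_of C \<mu>"
    unfolding \<mu>_def by (rule cdf_of_cdf_measure[OF C(1)])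
  have \<mu>n: "cdf_of (\<lambda>u. C u + t n * hs n u) (\<mu>n n)" for n
    unfolding \<mu>n_def by (rule cdf_of_cdf_measure[OF dom])
  have "(Psi K K' \<psi> (\<lambda>u. C u + t n * hs n u) - Psi K K' \<psi> C) / t n
      = ((LINT x | restrict_space (\<mu>n n) cube. chi K K' \<psi> (\<lambda>u. C u + t n * hs n u) x)
          - (LINT x | restrict_space (\<mu>n n) cube. chi K K' \<psi> C x)) / t n
        + ((LINT x | restrict_space (\<mu>n n) cube. chi K K' \<psi> C x)
          - (LINT x | restrict_space \<mu> cube. chi K K' \<psi> C x)) / t n" for n
    by (simp add: Psi_def \<mu>_def \<mu>n_def diff_divide_distrib)
  moreover have "(\<lambda>n. \<dots> n) \<longlonglongrightarrow> Dpsi K K' \<psi> C h"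
    unfolding Dpsi_def \<mu>_def[symmetric]
    by (intro tendsto_add chi_quotient_integral_tendsto[OF \<psi> \<mu> C(2) \<mu>n t h hs]
        stieltjes_quotient_tendsto[OF \<psi> \<mu> C(2) bv \<mu>n t(1) h hs])
  ultimately show ?thesis
    by simp
qed

theorem lemma1:
  fixes \<psi> :: "real^'n::finite \<Rightarrow> real" and K K' :: "'n set" and C :: "real^'n \<Rightarrow> real"
  assumes "continuous_on (cbox 0 1) \<psi>"
    and "copula C"
    and "hk_bv K' (chi K K' \<psi> C)"
  shows "hadamard_diff_tangent (Psi K K' \<psi>) cdfs {h. continuous_on (cbox 0 1) h} C (Dpsi K K' \<psi> C)"
proof -
  have C: "C \<in> cdfs" "continuous_on cube C"
    using assms(2) continuous_on_copula by (auto simp: copula_def)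
  obtain B where "\<And>f. continuous_on cube f \<Longrightarrow> \<bar>Dpsi K K' \<psi> C f\<bar> \<le> B * (SUP u\<in>cube. \<bar>f u\<bar>)"
    using abs_Dpsi_le[OF assms(1) C(1) assms(3)] by blast
  then show ?thesis
    unfolding hadamard_diff_tangent_def
    using Dpsi_linear[OF assms(1) C(1) assms(3)] Psi_difference_quotient_tendsto[OF assms(1) C assms(3)]
    by blast
qed

end
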